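(* Assume the setting below. Let $u(t,x)$ be a solution of the mature-population equation that spreads with speed $c^*/T$, i.e. $\lim_{t\to\infty}\sup_{|x|\ge ct}u(t,x)=0$ for $c>c^*/T$ and $\lim_{t\to\infty}\sup_{|x|\le ct}|u(t,x)-\bar u(t)|=0$ for $c\in(0,c^*/T)$. Let $v$ be the solution of $$\partial_tv=D_I(t)\partial_{xx}v-d_I(t)v+b(t,u(t,x))-R\big(t,u(t-\tau(t),\cdot)\big)(x)$$ with a bounded initial value $v(0,\cdot)$. Then $\lim_{t\to+\infty}\sup_{|x|\ge ct}v(x,t)=0$ for every $c>c^*/T$, and $\lim_{t\to+\infty}\sup_{|x|\le ct}|v(x,t)-\bar v(t)|=0$ for every $c\in(0,c^*/T)$.
   Context: Setting: $T>0$; $D_M,D_I\ge0$, $d_M,d_I>0$, $\tau>0$, $p\ge0$ are $C^1$ $T$-periodic; $h\in C^1([0,\infty);[0,\infty))$; $b(t,u)=p(t)h(u)$; $0<\alpha\le\beta<t_\alpha\le t_\beta<T$ with $t_\alpha-\tau(t_\alpha)=\alpha$, $t_\beta-\tau(t_\beta)=\beta$, $p=0$ on $[0,\alpha]\cup[\beta,T]$; $\tau'<1$; $h(0)=0$, $h(z)\to0$ as $z\to\infty$, $h$ increasing on $[0,z^* )$ and decreasing on $[z^*,\infty)$; $h(\lambda z)\ge\lambda h(z)$, $\lambda\in(0,1)$; $L>1$; $h$ nondecreasing on $[0,u^*]$. $k_I,k_M$ are the Green functions of $\partial_t\rho=D_I(t)\rho_{xx}-d_I(t)\rho$, resp. with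 $D_M,d_M$. $R(t,\phi)(x)=(1-\tau'(t))(k_I(t,t-\tau(t),\cdot)*b(t-\tau(t),\phi))(x)$. The mature-population equation is $\partial_tu=D_M(t)u_{xx}-d_M(t)u+R(t,u(t-\tau(t),\cdot))(x)$, with solutions determined by $u(0,\cdot)$; $Q$ is its time-$T$ map, $u^*$ the minimal positive fixed point of $Q$ restricted to constants, $\bar u(t)$ the ($T$-periodic) solution with $u(0)\equiv u^*$, and $c^*>0$ the spreading speed of $Q$. $L=\frac{\overline{k}_M(T,0)}{1-\overline{k}_M(T,0)}\int_{t_\alpha}^{t_\beta}\frac{(1-\tau'(s))e^{-\int_{s-\tau(s)}^sd_I}p(s-\tau(s))h'(0)}{\overline{k}_M(s,s-\tau(s))}ds$ with $\overline{k}_M(t,s)=e^{-\int_s^td_M}$. $\bar v(t)$ is the unique nontrivial bounded $T$-periodic, spatially constant solution of the $v$-equation with $u\equiv\bar u(t)$; explicitly $\bar v(t)=\int_0^te^{-\int_s^td_I}\big[b(s,\bar u(s))-R(s,\bar u(s-\tau(s)))\big]ds$. *)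

theory Defs
  imports "HOL-Analysis.Analysis"
begin

definition C1 :: "(real \<Rightarrow> real) \<Rightarrow> bool" where
  "C1 f \<longleftrightarrow> (\<exists>f'. continuous_on UNIV f' \<and> (\<forall>t. (f has_real_derivative f' t) (at t)))"

definition periodic_with :: "real \<Rightarrow> (real \<Rightarrow> real) \<Rightarrow> bool" where
  "periodic_with T f \<longleftrightarrow> (\<forall>t. f (t + T) = f t)"

text \<open>Solution operator (convolution with the Green function k) of
  rho_t = D(t) rho_xx - d(t) rho from time s to time t, applied to phi.
  With A = int_s^t D, the Green function is the Gaussian
  exp(-int_s^t d) (4 pi A)^(-1/2) exp(-x^2/(4A)) if A > 0, and the
  Dirac mass exp(-int_s^t d) delta_0 if A = 0 (possible since D \<ge> 0).\<close>
definition Gop :: "(real \<Rightarrow> real) \<Rightarrow> (real \<Rightarrow> real) \<Rightarrow> real \<Rightarrow> real \<Rightarrow> (real \<Rightarrow> real) \<Rightarrow> real \<Rightarrow> real" where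
  "Gop D d t s \<phi> x =
     (let A = integral {s..t} D; e = exp (- integral {s..t} d) in
      if A > 0 then e * (LINT y|lborel. exp (- ((x - y)\<^sup>2) / (4 * A)) / sqrt (4 * pi * A) * \<phi> y)
      else e * \<phi> x)"

definition kbar :: "(real \<Rightarrow> real) \<Rightarrow> real \<Rightarrow> real \<Rightarrow> real" where
  "kbar d t s = exp (- integral {s..t} d)"

text \<open>R(t,phi)(x) = (1 - tau'(t)) (k_I(t,t-tau(t),.) * b(t-tau(t),phi))(x), b(t,u) = p(t) h(u).\<close>
definition Rop :: "(real \<Rightarrow> real) \<Rightarrow> (real \<Rightarrow> real) \<Rightarrow> (real \<Rightarrow> real) \<Rightarrow> (real \<Rightarrow> real)
     \<Rightarrow> (real \<Rightarrow> real) \<Rightarrow> real \<Rightarrow> (real \<Rightarrow> real) \<Rightarrow> real \<Rightarrow> real" where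
  "Rop DI dI \<tau> p h t \<phi> x =
     (1 - deriv \<tau> t) * Gop DI dI t (t - \<tau> t) (\<lambda>y. p (t - \<tau> t) * h (\<phi> y)) x"

text \<open>(Mild) solution on t \<ge> 0 of the mature-population equation
  u_t = D_M u_xx - d_M u + R(t, u(t - tau(t), .)), with bounded, continuous,
  nonnegative initial value u(0,.).\<close>
definition mature_sol :: "(real \<Rightarrow> real) \<Rightarrow> (real \<Rightarrow> real) \<Rightarrow> (real \<Rightarrow> real) \<Rightarrow> (real \<Rightarrow> real)
     \<Rightarrow> (real \<Rightarrow> real) \<Rightarrow> (real \<Rightarrow> real) \<Rightarrow> (real \<Rightarrow> real) \<Rightarrow> (real \<Rightarrow> real \<Rightarrow> real) \<Rightarrow> bool" where
  "mature_sol DM dM DI dI \<tau> p h u \<longleftrightarrow>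
     continuous_on ({0..} \<times> UNIV) (\<lambda>(t, x). u t x) \<and>
     (\<forall>x. 0 \<le> u 0 x) \<and>
     (\<forall>t\<ge>0. bounded ((\<lambda>(s, x). u s x) ` ({0..t} \<times> UNIV))) \<and>
     (\<forall>t\<ge>0. \<forall>x. u t x = Gop DM dM t 0 (u 0) x
        + integral {0..t} (\<lambda>s. Gop DM dM t s (Rop DI dI \<tau> p h s (u (s - \<tau> s))) x))"

text \<open>Time-T map Q restricted to constant initial values.\<close>
definition Qc :: "real \<Rightarrow> (real \<Rightarrow> real) \<Rightarrow> (real \<Rightarrow> real) \<Rightarrow> (real \<Rightarrow> real) \<Rightarrow> (real \<Rightarrow> real)
     \<Rightarrow> (real \<Rightarrow> real) \<Rightarrow> (real \<Rightarrow> real) \<Rightarrow> (real \<Rightarrow> real) \<Rightarrow> real \<Rightarrow> real" where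
  "Qc T DM dM DI dI \<tau> p h z =
     (THE y. \<exists>w. mature_sol DM dM DI dI \<tau> p h (\<lambda>t x. w t) \<and> w 0 = z \<and> w T = y)"

definition Lconst :: "real \<Rightarrow> (real \<Rightarrow> real) \<Rightarrow> (real \<Rightarrow> real) \<Rightarrow> (real \<Rightarrow> real) \<Rightarrow> (real \<Rightarrow> real)
     \<Rightarrow> real \<Rightarrow> real \<Rightarrow> real \<Rightarrow> real" where
  "Lconst T dM dI \<tau> p h'0 t\<alpha> t\<beta> =
     kbar dM T 0 / (1 - kbar dM T 0) *
     integral {t\<alpha>..t\<beta>} (\<lambda>s. (1 - deriv \<tau> s) * exp (- integral {s - \<tau> s..s} dI)
        * p (s - \<tau> s) * h'0 / kbar dM s (s - \<tau> s))"

definition vbar :: "(real \<Rightarrow> real) \<Rightarrow> (real \<Rightarrow> real) \<Rightarrow> (real \<Rightarrow> real) \<Rightarrow> (real \<Rightarrow> real)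
     \<Rightarrow> (real \<Rightarrow> real) \<Rightarrow> (real \<Rightarrow> real) \<Rightarrow> real \<Rightarrow> real" where
  "vbar DI dI \<tau> p h ub t =
     integral {0..t} (\<lambda>s. exp (- integral {s..t} dI) *
        (p s * h (ub s) - Rop DI dI \<tau> p h s (\<lambda>y. ub (s - \<tau> s)) 0))"

end

(* The source term b(t, u) - R(t, u(t - tau t)) of the v-equation is bounded and inherits
   the behaviour of u: it tends to 0 uniformly on |x| >= c t for c > c*/T, and to the source
   term of the spatially constant solution ubar uniformly on |x| <= c t for c < c*/T.  In
   Duhamel's formula for v, respectively for v - vbar, the heat semigroup of the v-equation
   damps contributions from early times exponentially, since d_I is bounded below, and by a
   Chebyshev bound on the Gaussian, what it carries over a distance proportional to t
   contributes only O(1/t); everything else comes from where the source term is already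
   small. *)

theory Submission
  imports Defs "HOL-Probability.Distributions" "HOL-Real_Asymp.Real_Asymp"
begin

lemma C1_has_real_derivative: "C1 f \<Longrightarrow> (f has_real_derivative deriv f x) (at x)"
  unfolding C1_def using DERIV_imp_deriv by metis

lemma C1_imp_continuous: "C1 f \<Longrightarrow> continuous_on UNIV f"
  by (meson C1_has_real_derivative DERIV_isCont continuous_at_imp_continuous_on)

lemma C1_imp_continuous_deriv: "C1 f \<Longrightarrow> continuous_on UNIV (deriv f)"
proof -
  assume "C1 f"
  then obtain f' where "continuous_on UNIV f'" "\<And>t. (f has_real_derivative f' t) (at t)"
    unfolding C1_def by blast
  moreover from this(2) have "deriv f = f'"
    by (simp add: DERIV_imp_deriv fun_eq_iff)
  ultimately show ?thesis by simp
qed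

lemma periodic_with_int_shift:
  assumes "periodic_with T f"
  shows "f (x + real_of_int k * T) = f x"
proof -
  have nat_shift: "f (y + real n * T) = f y" for y n
  proof (induction n)
    case (Suc n)
    have "f (y + real (Suc n) * T) = f ((y + real n * T) + T)"
      by (simp add: algebra_simps)
    with Suc assms show ?case unfolding periodic_with_def by simp
  qed simp
  show ?thesis
  proof (cases "k \<ge> 0")
    case True
    then show ?thesis using nat_shift[of x "nat k"] by simp
  next
    case False
    then show ?thesis using nat_shift[of "x + real_of_int k * T" "nat (- k)"] by simp
  qed
qed

lemma periodic_with_reduce:
  assumes "periodic_with T f" "T > 0"
  obtains y where "y \<in> {0..T}" "f x = f y"
proof
  define k where "k = \<lfloor>x / T\<rfloor>"
  have "real_of_int k \<le> x / T" "x / T < real_of_int k + 1"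
    unfolding k_def by linarith+
  then have "real_of_int k * T \<le> x" "x < real_of_int k * T + T"
    using assms(2) by (simp_all add: pos_le_divide_eq pos_divide_less_eq distrib_right)
  then show "x - real_of_int k * T \<in> {0..T}" by simp
  show "f x = f (x - real_of_int k * T)"
    using periodic_with_int_shift[OF assms(1), of _ "- k"] by simp
qed

lemma periodic_continuous_attains_bounds:
  assumes "periodic_with T f" "T > 0" "continuous_on UNIV f"
  obtains a b where "\<And>x. f a \<le> f x" "\<And>x. f x \<le> f b"
proof -
  have cont: "continuous_on {0..T} f" and ne: "{0..T} \<noteq> {}"
    using assms(2,3) continuous_on_subset by auto
  obtain a where "a \<in> {0..T}" "\<forall>y\<in>{0..T}. f a \<le> f y"
    using continuous_attains_inf[OF compact_Icc ne cont] by blast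
  moreover obtain b where "b \<in> {0..T}" "\<forall>y\<in>{0..T}. f y \<le> f b"
    using continuous_attains_sup[OF compact_Icc ne cont] by blast
  ultimately show ?thesis
    using that periodic_with_reduce[OF assms(1,2)] by metis
qed

lemma periodic_with_deriv:
  assumes "C1 f" "periodic_with T f"
  shows "periodic_with T (deriv f)"
  unfolding periodic_with_def
proof
  fix t
  have "((\<lambda>x. f (x + T)) has_real_derivative deriv f (t + T)) (at t)"
    using DERIV_chain2[OF C1_has_real_derivative[OF assms(1)] DERIV_add[OF DERIV_ident DERIV_const]]
    by simp
  moreover have "(\<lambda>x. f (x + T)) = f"
    using assms(2) unfolding periodic_with_def by simp
  ultimately show "deriv f (t + T) = deriv f t"
    using DERIV_unique C1_has_real_derivative[OF assms(1), of t] by metis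
qed

lemma delay_map_strict_mono:
  assumes "C1 \<tau>" "\<And>t. deriv \<tau> t < 1" "a < b"
  shows "a - \<tau> a < b - \<tau> b"
proof -
  obtain z where "\<tau> b - \<tau> a = (b - a) * deriv \<tau> z"
    using MVT2[OF assms(3), of \<tau> "deriv \<tau>"] C1_has_real_derivative[OF assms(1)] by blast
  moreover have "(b - a) * deriv \<tau> z < b - a"
    using assms(2,3) mult_strict_left_mono[of "deriv \<tau> z" 1 "b - a"] by simp
  ultimately show ?thesis by simp
qed

text \<open>For \<open>s \<ge> 0\<close> the delayed time \<open>s - \<tau> s\<close> lies in \<open>[- \<tau> 0, 0)\<close>, which is contained in
  \<open>[\<beta> - T, 0)\<close>: one period before the window \<open>[\<beta>, T]\<close> on which \<open>p\<close> vanishes.\<close>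

lemma birth_rate_vanishes_before_zero:
  assumes \<tau>: "C1 \<tau>" "\<And>t. deriv \<tau> t < 1" and periodic: "periodic_with T \<tau>" "periodic_with T p"
    and t\<beta>: "t\<beta> < T" "t\<beta> - \<tau> t\<beta> = \<beta>" and p_zero: "\<And>t. t \<in> {\<beta>..T} \<Longrightarrow> p t = 0"
    and s: "0 \<le> s" "s - \<tau> s < 0"
  shows "p (s - \<tau> s) = 0"
proof -
  have "0 - \<tau> 0 \<le> s - \<tau> s"
    using delay_map_strict_mono[OF \<tau>, of 0 s] s(1) by (cases "s = 0") auto
  moreover have "\<beta> < T - \<tau> T"
    using delay_map_strict_mono[OF \<tau> t\<beta>(1)] t\<beta>(2) by simp
  moreover have "\<tau> T = \<tau> 0"
    using periodic(1) unfolding periodic_with_def by (metis add_0)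
  ultimately have "s - \<tau> s + T \<in> {\<beta>..T}" using s(2) by auto
  then show ?thesis
    using p_zero periodic(2) unfolding periodic_with_def by metis
qed

lemma continuous_on_ray_uniformly_near:
  fixes f :: "real \<Rightarrow> real"
  assumes "continuous_on {0..} f" "0 < e"
  obtains \<eta> where "0 < \<eta>" "\<And>z z'. 0 \<le> z \<Longrightarrow> z \<le> B \<Longrightarrow> 0 \<le> z' \<Longrightarrow> \<bar>z' - z\<bar> < \<eta> \<Longrightarrow> \<bar>f z' - f z\<bar> < e"
proof -
  have "uniformly_continuous_on {0..B + 1} f"
    using assms(1) by (intro compact_uniformly_continuous) (auto intro: continuous_on_subset)
  then obtain d where "0 < d" and d: "\<And>z z'. z \<in> {0..B + 1} \<Longrightarrow> z' \<in> {0..B + 1} \<Longrightarrow> \<bar>z' - z\<bar> < d \<Longrightarrow> \<bar>f z' - f z\<bar> < e"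
    unfolding uniformly_continuous_on_def dist_real_def using assms(2) by metis
  show ?thesis
  proof
    show "0 < min 1 d" using \<open>0 < d\<close> by simp
    fix z z' :: real
    assume "0 \<le> z" "z \<le> B" "0 \<le> z'" "\<bar>z' - z\<bar> < min 1 d"
    then show "\<bar>f z' - f z\<bar> < e" by (intro d) auto
  qed
qed

lemma continuous_on_ray_bounded_above:
  fixes f :: "real \<Rightarrow> real"
  assumes "continuous_on {0..} f" "(f \<longlongrightarrow> l) at_top"
  obtains B where "\<And>z. 0 \<le> z \<Longrightarrow> f z \<le> B"
proof -
  have "eventually (\<lambda>z. f z < l + 1) at_top"
    using order_tendstoD(2)[OF assms(2)] by simp
  then obtain Z where Z: "\<And>z. Z \<le> z \<Longrightarrow> f z < l + 1"
    unfolding eventually_at_top_linorder by blast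
  have "continuous_on {0..max Z 0} f" using assms(1) by (rule continuous_on_subset) auto
  moreover have "{0..max Z 0} \<noteq> {}" by simp
  ultimately obtain b where b: "\<And>y. y \<in> {0..max Z 0} \<Longrightarrow> f y \<le> f b"
    using continuous_attains_sup[OF compact_Icc] by blast
  show ?thesis
  proof (rule that)
    fix z :: real
    assume "0 \<le> z"
    then show "f z \<le> max (f b) (l + 1)"
      using b[of z] Z[of z] by (cases "z \<le> max Z 0") (auto simp: not_le less_imp_le le_max_iff_disj)
  qed
qed

lemma integral_nonneg_real:
  fixes f :: "real \<Rightarrow> real"
  assumes "\<And>x. x \<in> S \<Longrightarrow> 0 \<le> f x"
  shows "0 \<le> integral S f"
proof (cases "f integrable_on S")
  case True
  then show ?thesis using assms by (rule Henstock_Kurzweil_Integration.integral_nonneg)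
qed (simp add: not_integrable_integral)

lemma integral_atLeastAtMost_empty: "b \<le> a \<Longrightarrow> integral {a..b} (f :: real \<Rightarrow> real) = 0"
  by (metis atLeastatMost_empty' content_real_eq_0 integral_null interval_cbox le_less)

definition signed_integral :: "(real \<Rightarrow> real) \<Rightarrow> real \<Rightarrow> real" where
  "signed_integral f x = integral {0..x} f - integral {x..0} f"

lemma integral_eq_signed_integral_diff:
  fixes f :: "real \<Rightarrow> real"
  assumes f: "continuous_on UNIV f" and "x \<le> y"
  shows "integral {x..y} f = signed_integral f y - signed_integral f x"
proof -
  have int: "f integrable_on {a..b}" for a b
    by (meson f continuous_on_subset integrable_continuous_interval subset_UNIV)
  consider "0 \<le> x" | "x < 0" "0 \<le> y" | "y < 0" by linarith
  then show ?thesis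
  proof cases
    case 1
    then show ?thesis
      using Henstock_Kurzweil_Integration.integral_combine[OF 1 \<open>x \<le> y\<close> int] \<open>x \<le> y\<close>
        integral_atLeastAtMost_empty[of 0 x f] integral_atLeastAtMost_empty[of 0 y f]
      unfolding signed_integral_def by simp
  next
    case 2
    then show ?thesis
      using Henstock_Kurzweil_Integration.integral_combine[of x 0 y f] int
        integral_atLeastAtMost_empty[of 0 y f] integral_atLeastAtMost_empty[of x 0 f]
      unfolding signed_integral_def by simp
  next
    case 3
    then show ?thesis
      using Henstock_Kurzweil_Integration.integral_combine[of x y 0 f] int \<open>x \<le> y\<close>
        integral_atLeastAtMost_empty[of y 0 f] integral_atLeastAtMost_empty[of x 0 f]
      unfolding signed_integral_def by simp
  qed
qed

lemma continuous_on_signed_integral: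
  fixes f :: "real \<Rightarrow> real"
  assumes f: "continuous_on UNIV f"
  shows "continuous_on UNIV (signed_integral f)"
proof (rule continuous_at_imp_continuous_on, intro ballI)
  fix x :: real
  define n where "n = \<bar>x\<bar> + 1"
  have "continuous_on {-n..n} (\<lambda>y. signed_integral f (-n) + integral {-n..y} f)"
    using f by (intro continuous_intros indefinite_integral_continuous_1 integrable_continuous_interval)
      (auto intro: continuous_on_subset)
  moreover have "signed_integral f (-n) + integral {-n..y} f = signed_integral f y" if "y \<in> {-n..n}" for y
    using that integral_eq_signed_integral_diff[OF f, of "-n" y] by simp
  ultimately have "continuous_on {-n..n} (signed_integral f)"
    using continuous_on_eq by blast
  moreover have "x \<in> interior {-n..n}" unfolding n_def by auto
  ultimately show "isCont (signed_integral f) x" using continuous_on_interior by blast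
qed

lemma continuous_on_integral_between:
  fixes f a b :: "real \<Rightarrow> real"
  assumes f: "continuous_on UNIV f" and a: "continuous_on UNIV a" and b: "continuous_on UNIV b"
  shows "continuous_on UNIV (\<lambda>s. integral {a s..b s} f)"
proof -
  have "integral {a s..b s} f = signed_integral f (max (a s) (b s)) - signed_integral f (a s)" for s
    using integral_eq_signed_integral_diff[OF f, of "a s" "b s"]
    by (cases "a s \<le> b s") (simp_all add: integral_atLeastAtMost_empty)
  moreover have "continuous_on UNIV (\<lambda>s. signed_integral f (max (a s) (b s)) - signed_integral f (a s))"
    by (intro continuous_intros continuous_on_compose2[OF continuous_on_signed_integral[OF f]] a b) auto
  ultimately show ?thesis by simp
qed

lemma integral_abs_le_exp_decay:
  fixes g :: "real \<Rightarrow> real"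
  assumes \<delta>: "\<delta> > 0" and t: "0 \<le> t" and "0 \<le> a" "0 \<le> c"
    and g: "\<And>s. s \<in> {0..t} \<Longrightarrow> \<bar>g s\<bar> \<le> exp (- \<delta> * (t - s)) * a + c"
  shows "\<bar>integral {0..t} g\<bar> \<le> a / \<delta> + c * t"
proof -
  define b where "b s = exp (- \<delta> * (t - s)) * a + c" for s
  define E where "E s = exp (- \<delta> * (t - s)) / \<delta>" for s
  have "((\<lambda>s. exp (- \<delta> * (t - s))) has_integral E t - E 0) {0..t}"
  proof (rule fundamental_theorem_of_calculus[OF t])
    fix s
    have "(E has_real_derivative exp (- \<delta> * (t - s))) (at s within {0..t})"
      unfolding E_def using \<delta> by (auto intro!: derivative_eq_intros)
    then show "(E has_vector_derivative exp (- \<delta> * (t - s))) (at s within {0..t})"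
      by (simp add: has_real_derivative_iff_has_vector_derivative)
  qed
  then have "((\<lambda>s. exp (- \<delta> * (t - s))) has_integral (1 - exp (- \<delta> * t)) / \<delta>) {0..t}"
    by (simp add: E_def diff_divide_distrib)
  then have b: "(b has_integral (1 - exp (- \<delta> * t)) / \<delta> * a + c * t) {0..t}"
    unfolding b_def using t has_integral_const_real[of c 0 t]
    by (intro has_integral_add has_integral_mult_left) (auto simp: mult.commute)
  have "\<bar>integral {0..t} g\<bar> \<le> integral {0..t} b"
  proof (cases "g integrable_on {0..t}")
    case True
    then show ?thesis
      using integral_norm_bound_integral[OF True has_integral_integrable[OF b]] g
      unfolding b_def by simp
  next
    case False
    then show ?thesis
      using integral_nonneg_real[of "{0..t}" b] assms(3,4) by (simp add: b_def not_integrable_integral)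
  qed
  also have "\<dots> = (1 - exp (- \<delta> * t)) / \<delta> * a + c * t"
    using b by (rule integral_unique)
  also have "\<dots> \<le> a / \<delta> + c * t"
  proof -
    have "(1 - exp (- \<delta> * t)) * a \<le> a"
      using \<open>0 \<le> a\<close> by (simp add: algebra_simps)
    then show ?thesis using \<delta> by (simp add: divide_right_mono)
  qed
  finally show ?thesis .
qed

lemma Sup_tendsto_0_if_uniformly_small:
  fixes f :: "'a \<Rightarrow> 'b \<Rightarrow> real"
  assumes "\<And>e. e > 0 \<Longrightarrow> eventually (\<lambda>t. \<forall>x. P t x \<longrightarrow> \<bar>f t x\<bar> \<le> e) F"
    and "eventually (\<lambda>t. \<exists>x. P t x) F"
  shows "((\<lambda>t. Sup {f t x | x. P t x}) \<longlongrightarrow> 0) F"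
proof (rule tendstoI)
  fix e :: real
  assume "e > 0"
  then have "e / 2 > 0" by simp
  from assms(1)[OF this] assms(2)
  show "eventually (\<lambda>t. dist (Sup {f t x | x. P t x}) 0 < e) F"
  proof eventually_elim
    case (elim t)
    then obtain x0 where "P t x0" by blast
    have bdd: "bdd_above {f t x | x. P t x}"
      using elim(1) by (intro bdd_aboveI[of _ "e / 2"]) auto
    have "Sup {f t x | x. P t x} \<le> e / 2"
      using elim(1) \<open>P t x0\<close> by (intro cSup_least) auto
    moreover have "f t x0 \<le> Sup {f t x | x. P t x}"
      using \<open>P t x0\<close> bdd by (intro cSup_upper) auto
    moreover have "- (e / 2) \<le> f t x0"
      using elim(1) \<open>P t x0\<close> by fastforce
    ultimately show ?case using \<open>e > 0\<close> by (simp add: dist_real_def)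
  qed
qed

lemma eventually_le_if_Sup_tendsto_0:
  fixes f :: "'a \<Rightarrow> 'b \<Rightarrow> real"
  assumes "((\<lambda>t. Sup {f t x | x. P t x}) \<longlongrightarrow> 0) F"
    and "eventually (\<lambda>t. bdd_above {f t x | x. P t x}) F" and "e > 0"
  shows "eventually (\<lambda>t. \<forall>x. P t x \<longrightarrow> f t x \<le> e) F"
  using order_tendstoD(2)[OF assms(1) assms(3)] assms(2)
proof eventually_elim
  case (elim t)
  then show ?case
    by (metis (mono_tags, lifting) cSup_upper dual_order.trans less_imp_le mem_Collect_eq)
qed

lemma borel_measurable_pair_continuous_on:
  fixes f :: "real \<times> real \<Rightarrow> real"
  shows "continuous_on UNIV f \<Longrightarrow> f \<in> borel_measurable (borel \<Otimes>\<^sub>M borel)"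
  using borel_measurable_continuous_onI borel_prod by metis

section \<open>The heat semigroup\<close>

definition heat_kernel :: "real \<Rightarrow> real \<Rightarrow> real \<Rightarrow> real" where
  "heat_kernel A x y = exp (- ((x - y)\<^sup>2) / (4 * A)) / sqrt (4 * pi * A)"

lemma heat_kernel_eq_normal_density:
  assumes "A > 0"
  shows "heat_kernel A x y = normal_density x (sqrt (2 * A)) y"
proof -
  have "(sqrt (2 * A))\<^sup>2 = 2 * A" "(y - x)\<^sup>2 = (x - y)\<^sup>2"
    using assms by (simp_all add: power2_commute)
  then show ?thesis
    unfolding normal_density_def heat_kernel_def by (simp add: field_simps)
qed

lemma heat_kernel_nonneg: "A > 0 \<Longrightarrow> 0 \<le> heat_kernel A x y"
  by (simp add: heat_kernel_eq_normal_density normal_density_nonneg)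

lemma integrable_heat_kernel: "A > 0 \<Longrightarrow> integrable lborel (\<lambda>y. heat_kernel A x y)"
  using heat_kernel_eq_normal_density[of A x] integrable_normal_density by simp

lemma integral_heat_kernel: "A > 0 \<Longrightarrow> (LINT y|lborel. heat_kernel A x y) = 1"
  using heat_kernel_eq_normal_density[of A x] integral_normal_density by simp

lemma integrable_heat_kernel_moment:
  "A > 0 \<Longrightarrow> integrable lborel (\<lambda>y. heat_kernel A x y * (y - x)\<^sup>2)"
  using heat_kernel_eq_normal_density[of A x]
    integrable_normal_moment[where \<mu>=x and \<sigma>="sqrt (2 * A)" and k=2] by simp

lemma integral_heat_kernel_moment:
  assumes "A > 0"
  shows "(LINT y|lborel. heat_kernel A x y * (y - x)\<^sup>2) = 2 * A"
proof -
  have "(LINT y|lborel. heat_kernel A x y * (y - x)\<^sup>2)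
      = (LINT y|lborel. normal_density x (sqrt (2 * A)) y * (y - x) ^ (2 * 1))"
    using assms by (simp add: heat_kernel_eq_normal_density)
  also have "\<dots> = fact (2 * 1) / ((2 / (sqrt (2 * A))\<^sup>2) ^ 1 * fact 1)"
    using assms by (intro integral_normal_moment_even) simp
  finally show ?thesis using assms by simp
qed

lemma Gop_eq:
  "Gop D d t s \<phi> x =
     (if integral {s..t} D > 0
      then exp (- integral {s..t} d) * (LINT y|lborel. heat_kernel (integral {s..t} D) x y * \<phi> y)
      else exp (- integral {s..t} d) * \<phi> x)"
  unfolding Gop_def Let_def heat_kernel_def by simp

lemma Gop_nonneg:
  assumes "\<And>y. 0 \<le> \<phi> y"
  shows "0 \<le> Gop D d t s \<phi> x"
  unfolding Gop_eq using assms heat_kernel_nonneg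
  by (auto intro!: integral_nonneg_AE)

lemma Gop_const: "Gop D d t s (\<lambda>y. c) x = exp (- integral {s..t} d) * c"
  unfolding Gop_eq by (simp add: integral_heat_kernel)

lemma LINT_abs_le:
  fixes f g :: "real \<Rightarrow> real"
  assumes "integrable lborel g" "\<And>y. \<bar>f y\<bar> \<le> g y"
  shows "\<bar>LINT y|lborel. f y\<bar> \<le> (LINT y|lborel. g y)"
proof (cases "integrable lborel f")
  case True
  then show ?thesis using Bochner_Integration.integral_norm_bound_integral[OF True assms(1)] assms(2) by simp
next
  case False
  have "0 \<le> (LINT y|lborel. g y)"
    using assms(2) by (intro integral_nonneg_AE) (auto intro: order_trans[OF abs_ge_zero])
  then show ?thesis by (simp add: not_integrable_integral_eq[OF False])
qed

text \<open>A Chebyshev-type estimate: the Gaussian of variance \<open>2A\<close> puts mass at most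
  \<open>2A/r\<^sup>2\<close> outside the ball of radius \<open>r\<close>.\<close>

lemma heat_kernel_integral_abs_le_local:
  assumes A: "A > 0" and M: "\<And>y. \<bar>\<phi> y\<bar> \<le> M"
    and near: "\<And>y. \<bar>y - x\<bar> \<le> r \<Longrightarrow> \<bar>\<phi> y\<bar> \<le> \<epsilon>" and r: "r > 0"
  shows "\<bar>LINT y|lborel. heat_kernel A x y * \<phi> y\<bar> \<le> \<epsilon> + 2 * M * A / r\<^sup>2"
proof -
  have "0 \<le> M" using M order_trans[OF abs_ge_zero] by blast
  have "\<bar>\<phi> y\<bar> \<le> \<epsilon> + M * (y - x)\<^sup>2 / r\<^sup>2" for y
  proof (cases "\<bar>y - x\<bar> \<le> r")
    case True
    moreover have "0 \<le> M * (y - x)\<^sup>2 / r\<^sup>2" using \<open>0 \<le> M\<close> by simp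
    ultimately show ?thesis using near by fastforce
  next
    case False
    then have "r\<^sup>2 \<le> (y - x)\<^sup>2"
      using r by (metis abs_le_square_iff abs_of_pos le_cases less_imp_le power2_abs)
    then have "M \<le> M * (y - x)\<^sup>2 / r\<^sup>2" using \<open>0 \<le> M\<close> r by (simp add: le_divide_eq mult_left_mono)
    then show ?thesis using M[of y] near[of x] r by auto
  qed
  note pointwise = this
  have "\<bar>LINT y|lborel. heat_kernel A x y * \<phi> y\<bar>
      \<le> (LINT y|lborel. \<epsilon> * heat_kernel A x y + M / r\<^sup>2 * (heat_kernel A x y * (y - x)\<^sup>2))"
  proof (rule LINT_abs_le)
    show "integrable lborel (\<lambda>y. \<epsilon> * heat_kernel A x y + M / r\<^sup>2 * (heat_kernel A x y * (y - x)\<^sup>2))"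
      using integrable_heat_kernel[OF A] integrable_heat_kernel_moment[OF A] by simp
    fix y
    have "\<bar>heat_kernel A x y * \<phi> y\<bar> \<le> heat_kernel A x y * (\<epsilon> + M * (y - x)\<^sup>2 / r\<^sup>2)"
      using heat_kernel_nonneg[OF A] pointwise by (simp add: abs_mult mult_left_mono)
    then show "\<bar>heat_kernel A x y * \<phi> y\<bar>
        \<le> \<epsilon> * heat_kernel A x y + M / r\<^sup>2 * (heat_kernel A x y * (y - x)\<^sup>2)"
      by (simp add: field_simps)
  qed
  also have "\<dots> = \<epsilon> + 2 * M * A / r\<^sup>2"
    using integrable_heat_kernel[OF A] integrable_heat_kernel_moment[OF A]
    by (simp add: integral_heat_kernel[OF A] integral_heat_kernel_moment[OF A])
  finally show ?thesis .
qed

lemma Gop_abs_le_local: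
  assumes D: "\<And>t. 0 \<le> D t" and M: "\<And>y. \<bar>\<phi> y\<bar> \<le> M"
    and near: "\<And>y. \<bar>y - x\<bar> \<le> r \<Longrightarrow> \<bar>\<phi> y\<bar> \<le> \<epsilon>" and r: "r > 0"
  shows "\<bar>Gop D d t s \<phi> x\<bar> \<le> exp (- integral {s..t} d) * (\<epsilon> + 2 * M * integral {s..t} D / r\<^sup>2)"
proof (cases "integral {s..t} D > 0")
  case True
  then show ?thesis
    unfolding Gop_eq using heat_kernel_integral_abs_le_local[OF True M near r]
    by (simp add: abs_mult mult_left_mono)
next
  case False
  moreover have "0 \<le> integral {s..t} D" using D by (rule integral_nonneg_real)
  ultimately show ?thesis
    unfolding Gop_eq using near[of x] r by (simp add: abs_mult mult_left_mono)
qed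

lemma Gop_abs_le:
  assumes M: "\<And>y. \<bar>\<phi> y\<bar> \<le> M"
  shows "\<bar>Gop D d t s \<phi> x\<bar> \<le> exp (- integral {s..t} d) * M"
proof -
  define A where "A = integral {s..t} D"
  have "\<bar>LINT y|lborel. heat_kernel A x y * \<phi> y\<bar> \<le> M" if A: "A > 0"
  proof -
    have "\<bar>LINT y|lborel. heat_kernel A x y * \<phi> y\<bar> \<le> (LINT y|lborel. M * heat_kernel A x y)"
    proof (rule LINT_abs_le)
      show "integrable lborel (\<lambda>y. M * heat_kernel A x y)"
        using integrable_heat_kernel[OF A] by simp
      show "\<bar>heat_kernel A x y * \<phi> y\<bar> \<le> M * heat_kernel A x y" for y
        using mult_right_mono[OF M[of y] heat_kernel_nonneg[OF A, of x y]] heat_kernel_nonneg[OF A, of x y]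
        by (simp add: abs_mult mult.commute)
    qed
    then show ?thesis using integral_heat_kernel[OF A] by simp
  qed
  then show ?thesis
    unfolding Gop_eq A_def[symmetric] using M[of x] by (simp add: abs_mult mult_left_mono)
qed

lemma Gop_diff_const:
  assumes meas: "\<phi> \<in> borel_measurable borel" and M: "\<And>y. \<bar>\<phi> y\<bar> \<le> M"
  shows "Gop D d t s (\<lambda>y. \<phi> y - c) x = Gop D d t s \<phi> x - exp (- integral {s..t} d) * c"
proof -
  have "(LINT y|lborel. heat_kernel A x y * (\<phi> y - c)) = (LINT y|lborel. heat_kernel A x y * \<phi> y) - c"
    if A: "A > 0" for A
  proof -
    have "integrable lborel (\<lambda>y. heat_kernel A x y * \<phi> y)"
    proof (rule Bochner_Integration.integrable_bound)
      show "integrable lborel (\<lambda>y. M * heat_kernel A x y)"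
        using integrable_heat_kernel[OF A] by simp
      show "(\<lambda>y. heat_kernel A x y * \<phi> y) \<in> borel_measurable lborel"
        using meas unfolding heat_kernel_def by measurable
      show "AE y in lborel. norm (heat_kernel A x y * \<phi> y) \<le> norm (M * heat_kernel A x y)"
      proof (intro AE_I2)
        fix y
        have "\<bar>\<phi> y\<bar> * heat_kernel A x y \<le> \<bar>M\<bar> * heat_kernel A x y"
          using M[of y] heat_kernel_nonneg[OF A] by (intro mult_right_mono) auto
        then show "norm (heat_kernel A x y * \<phi> y) \<le> norm (M * heat_kernel A x y)"
          using heat_kernel_nonneg[OF A, of x y] by (simp add: abs_mult mult.commute)
      qed
    qed
    then show ?thesis
      using integrable_heat_kernel[OF A] integral_heat_kernel[OF A]
      by (simp add: right_diff_distrib)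
  qed
  then show ?thesis unfolding Gop_eq by (simp add: right_diff_distrib)
qed

lemma Gop_measurable:
  fixes D d a b :: "real \<Rightarrow> real" and \<phi> :: "real \<Rightarrow> real \<Rightarrow> real"
  assumes "continuous_on UNIV D" "continuous_on UNIV d" "continuous_on UNIV a" "continuous_on UNIV b"
    and \<phi>: "(\<lambda>(s, y). \<phi> s y) \<in> borel_measurable (borel \<Otimes>\<^sub>M borel)"
  shows "(\<lambda>(s, y). Gop D d (b s) (a s) (\<phi> s) y) \<in> borel_measurable (borel \<Otimes>\<^sub>M borel)"
proof -
  define \<Phi> where "\<Phi> = (\<lambda>(s, y). \<phi> s y)"
  have [measurable]: "\<Phi> \<in> borel_measurable (borel \<Otimes>\<^sub>M borel)" using \<phi> unfolding \<Phi>_def .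
  have [measurable]: "(\<lambda>s. integral {a s..b s} D) \<in> borel_measurable borel"
    "(\<lambda>s. integral {a s..b s} d) \<in> borel_measurable borel"
    using assms(1-4) by (intro borel_measurable_continuous_onI continuous_on_integral_between; simp)+
  have "(\<lambda>(p, z). heat_kernel (integral {a (fst p)..b (fst p)} D) (snd p) z * \<Phi> (fst p, z))
      \<in> borel_measurable ((borel \<Otimes>\<^sub>M borel) \<Otimes>\<^sub>M lborel)"
    unfolding heat_kernel_def by measurable
  from lborel.borel_measurable_lebesgue_integral[OF this]
  have [measurable]: "(\<lambda>p. LINT z|lborel. heat_kernel (integral {a (fst p)..b (fst p)} D) (snd p) z * \<Phi> (fst p, z))
      \<in> borel_measurable (borel \<Otimes>\<^sub>M borel)"
    by simp
  have "(\<lambda>p. if integral {a (fst p)..b (fst p)} D > 0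
      then exp (- integral {a (fst p)..b (fst p)} d) *
        (LINT z|lborel. heat_kernel (integral {a (fst p)..b (fst p)} D) (snd p) z * \<Phi> (fst p, z))
      else exp (- integral {a (fst p)..b (fst p)} d) * \<Phi> p) \<in> borel_measurable (borel \<Otimes>\<^sub>M borel)"
    by measurable
  then show ?thesis
    by (rule measurable_cong[THEN iffD1, rotated]) (simp add: Gop_eq \<Phi>_def split_beta)
qed

section \<open>Mild solutions and the source term\<close>

lemma mature_sol_bounded_on:
  assumes "mature_sol DM dM DI dI \<tau> p h w"
  obtains B where "\<And>s x. 0 \<le> s \<Longrightarrow> s \<le> t \<Longrightarrow> \<bar>w s x\<bar> \<le> B"
proof (cases "0 \<le> t")
  case True
  then have "bounded ((\<lambda>(s, x). w s x) ` ({0..t} \<times> UNIV))"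
    using assms unfolding mature_sol_def by blast
  then obtain B where "\<forall>z\<in>(\<lambda>(s, x). w s x) ` ({0..t} \<times> UNIV). \<bar>z\<bar> \<le> B"
    unfolding bounded_iff by auto
  then show ?thesis using that by fastforce
next
  case False
  then show ?thesis by (intro that[of 0]) linarith
qed

lemma mature_sol_periodic_bounded:
  assumes "mature_sol DM dM DI dI \<tau> p h (\<lambda>t x. U t)" "periodic_with T U" "0 < T"
  obtains B where "\<And>s. \<bar>U s\<bar> \<le> B"
proof -
  obtain B where B: "\<And>s x. 0 \<le> s \<Longrightarrow> s \<le> T \<Longrightarrow> \<bar>U s\<bar> \<le> B"
    by (rule mature_sol_bounded_on[OF assms(1), where t = T]) (rule that)
  show ?thesis
  proof (rule that)
    fix s
    obtain r where "r \<in> {0..T}" "U s = U r"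
      using periodic_with_reduce[OF assms(2,3)] by blast
    then show "\<bar>U s\<bar> \<le> B" using B[of r] by simp
  qed
qed

lemma mature_sol_continuous_clamped:
  assumes "mature_sol DM dM DI dI \<tau> p h w"
  shows "continuous_on UNIV (\<lambda>(s, y). w (max s 0) y)"
proof -
  have "continuous_on ({0..} \<times> UNIV) (\<lambda>(t, x). w t x)"
    using assms unfolding mature_sol_def by blast
  then have "continuous_on UNIV (\<lambda>q. (\<lambda>(t, x). w t x) (max (fst q) 0, snd q))"
    by (rule continuous_on_compose2) (auto intro!: continuous_intros)
  then show ?thesis by (simp add: case_prod_beta')
qed

lemma mature_sol_continuous_at:
  assumes "mature_sol DM dM DI dI \<tau> p h w" "0 \<le> t"
  shows "continuous_on UNIV (w t)"
proof -
  have "continuous_on UNIV (\<lambda>y. (\<lambda>(s, y). w (max s 0) y) (t, y))"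
    by (rule continuous_on_compose2[OF mature_sol_continuous_clamped[OF assms(1)]])
      (auto intro!: continuous_intros)
  then show ?thesis using assms(2) by simp
qed

locale bounded_delay_model =
  fixes DI dI \<tau> p h :: "real \<Rightarrow> real" and \<delta> Dmax \<tau>min \<tau>max P H K :: real
  assumes DI_cont: "continuous_on UNIV DI" and dI_cont: "continuous_on UNIV dI"
    and \<tau>_cont: "continuous_on UNIV \<tau>" and deriv_\<tau>_cont: "continuous_on UNIV (deriv \<tau>)"
    and p_cont: "continuous_on UNIV p" and h_cont: "continuous_on {0..} h"
    and DI_nonneg: "\<And>t. 0 \<le> DI t" and DI_le: "\<And>t. DI t \<le> Dmax"
    and \<delta>_pos: "0 < \<delta>" and dI_ge: "\<And>t. \<delta> \<le> dI t"
    and \<tau>min_pos: "0 < \<tau>min" and \<tau>_bounds: "\<And>t. \<tau>min \<le> \<tau> t" "\<And>t. \<tau> t \<le> \<tau>max"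
    and deriv_\<tau>_bounds: "\<And>t. 0 \<le> 1 - deriv \<tau> t" "\<And>t. 1 - deriv \<tau> t \<le> K"
    and p_nonneg: "\<And>t. 0 \<le> p t" and p_le: "\<And>t. p t \<le> P"
    and h_nonneg: "\<And>z. 0 \<le> z \<Longrightarrow> 0 \<le> h z" and h_le: "\<And>z. 0 \<le> z \<Longrightarrow> h z \<le> H"
    and h_0: "h 0 = 0"
    and p_delay_zero: "\<And>s. 0 \<le> s \<Longrightarrow> s - \<tau> s < 0 \<Longrightarrow> p (s - \<tau> s) = 0"
begin

lemma bounds_nonneg: "0 \<le> Dmax" "0 \<le> \<tau>max" "0 \<le> P" "0 \<le> H" "0 \<le> K"
  using DI_nonneg[of 0] DI_le[of 0] \<tau>min_pos \<tau>_bounds[of 0] p_nonneg[of 0] p_le[of 0]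
    h_le[of 0] h_0 deriv_\<tau>_bounds[of 0] by linarith+

lemma \<tau>_pos: "0 < \<tau> t"
  using \<tau>min_pos \<tau>_bounds(1) less_le_trans by blast

lemma integral_DI_le:
  assumes "s \<le> t"
  shows "integral {s..t} DI \<le> Dmax * (t - s)"
proof -
  have "integral {s..t} DI \<le> integral {s..t} (\<lambda>_. Dmax)"
    using DI_le continuous_on_subset[OF DI_cont]
    by (intro integral_le integrable_continuous_interval) (auto intro: continuous_on_const)
  then show ?thesis using assms by (simp add: mult.commute)
qed

lemma exp_integral_dI_le:
  assumes "s \<le> t"
  shows "exp (- integral {s..t} dI) \<le> exp (- \<delta> * (t - s))"
proof -
  have "integral {s..t} (\<lambda>_. \<delta>) \<le> integral {s..t} dI"
    using dI_ge continuous_on_subset[OF dI_cont]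
    by (intro integral_le integrable_continuous_interval) (auto intro: continuous_on_const)
  then show ?thesis using assms by (simp add: mult.commute)
qed

lemma exp_integral_dI_le_1: "exp (- integral {s..t} dI) \<le> 1"
proof -
  have "0 \<le> integral {s..t} dI"
    using dI_ge \<delta>_pos by (intro integral_nonneg_real) (meson less_le_trans less_imp_le)
  then show ?thesis by simp
qed

lemma Gop_DI_abs_le:
  assumes "s \<le> t" "\<And>y. \<bar>\<phi> y\<bar> \<le> M"
  shows "\<bar>Gop DI dI t s \<phi> x\<bar> \<le> exp (- \<delta> * (t - s)) * M"
proof -
  have "0 \<le> M" using assms(2) order_trans[OF abs_ge_zero] by blast
  then show ?thesis
    using Gop_abs_le[OF assms(2)] exp_integral_dI_le[OF assms(1)]
    by (meson mult_right_mono order_trans)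
qed

lemma Gop_DI_abs_le_local:
  assumes st: "s \<le> t" and M: "\<And>y. \<bar>\<phi> y\<bar> \<le> M"
    and near: "\<And>y. \<bar>y - x\<bar> \<le> r \<Longrightarrow> \<bar>\<phi> y\<bar> \<le> \<epsilon>" and r: "r > 0"
  shows "\<bar>Gop DI dI t s \<phi> x\<bar> \<le> exp (- \<delta> * (t - s)) * \<epsilon> + 2 * M * Dmax / (\<delta> * r\<^sup>2)"
proof -
  define q where "q = exp (- \<delta> * (t - s))"
  have "0 \<le> M" using M order_trans[OF abs_ge_zero] by blast
  have "0 \<le> \<epsilon>" using near[of x] r abs_ge_zero[of "\<phi> x"] by simp
  have "0 \<le> integral {s..t} DI" using DI_nonneg by (rule integral_nonneg_real)
  txt \<open>The factor \<open>t - s\<close> coming from the variance is absorbed by the decay, as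
    \<open>x e\<^sup>-\<^sup>x \<le> 1\<close>.\<close>
  have "\<delta> * (t - s) \<le> exp (\<delta> * (t - s))"
    using exp_ge_add_one_self[of "\<delta> * (t - s)"] by linarith
  then have "\<delta> * (t - s) * exp (- (\<delta> * (t - s))) \<le> 1"
    using mult_right_mono[of "\<delta> * (t - s)" "exp (\<delta> * (t - s))" "exp (- (\<delta> * (t - s)))"]
    by (simp add: exp_minus_inverse)
  then have decay: "q * (t - s) \<le> 1 / \<delta>"
    using \<delta>_pos unfolding q_def by (simp add: field_simps)
  have "\<bar>Gop DI dI t s \<phi> x\<bar> \<le> exp (- integral {s..t} dI) * (\<epsilon> + 2 * M * integral {s..t} DI / r\<^sup>2)"
    using Gop_abs_le_local[OF DI_nonneg M near r] .
  also have "\<dots> \<le> q * (\<epsilon> + 2 * M * (Dmax * (t - s)) / r\<^sup>2)"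
    unfolding q_def using exp_integral_dI_le[OF st] integral_DI_le[OF st] \<open>0 \<le> M\<close> \<open>0 \<le> \<epsilon>\<close>
      \<open>0 \<le> integral {s..t} DI\<close>
    by (intro mult_mono add_left_mono divide_right_mono mult_left_mono) auto
  also have "\<dots> = q * \<epsilon> + 2 * M * Dmax / r\<^sup>2 * (q * (t - s))"
    by (simp add: algebra_simps)
  also have "\<dots> \<le> q * \<epsilon> + 2 * M * Dmax / r\<^sup>2 * (1 / \<delta>)"
    using decay \<open>0 \<le> M\<close> bounds_nonneg by (intro add_left_mono mult_left_mono) auto
  finally show ?thesis unfolding q_def by (simp add: mult.commute)
qed

lemma Gop_delay_abs_le_local:
  assumes M: "\<And>y. \<bar>\<phi> y\<bar> \<le> M"
    and near: "\<And>z. \<bar>z - y\<bar> \<le> r \<Longrightarrow> \<bar>\<phi> z\<bar> \<le> \<epsilon>" and r: "r > 0"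
  shows "\<bar>Gop DI dI s (s - \<tau> s) \<phi> y\<bar> \<le> \<epsilon> + 2 * M * (Dmax * \<tau>max) / r\<^sup>2"
proof -
  have "0 \<le> M" using M order_trans[OF abs_ge_zero] by blast
  have "0 \<le> \<epsilon>" using near[of y] r abs_ge_zero[of "\<phi> y"] by simp
  have "0 \<le> integral {s - \<tau> s..s} DI" using DI_nonneg by (rule integral_nonneg_real)
  have "integral {s - \<tau> s..s} DI \<le> Dmax * \<tau> s"
    using integral_DI_le[of "s - \<tau> s" s] \<tau>_pos[of s] by simp
  also have "\<dots> \<le> Dmax * \<tau>max"
    using \<tau>_bounds(2) bounds_nonneg by (simp add: mult_left_mono)
  finally have "integral {s - \<tau> s..s} DI \<le> Dmax * \<tau>max" .
  have "\<bar>Gop DI dI s (s - \<tau> s) \<phi> y\<bar>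
      \<le> exp (- integral {s - \<tau> s..s} dI) * (\<epsilon> + 2 * M * integral {s - \<tau> s..s} DI / r\<^sup>2)"
    using Gop_abs_le_local[OF DI_nonneg M near r] .
  also have "\<dots> \<le> \<epsilon> + 2 * M * integral {s - \<tau> s..s} DI / r\<^sup>2"
    using exp_integral_dI_le_1 \<open>0 \<le> M\<close> \<open>0 \<le> \<epsilon>\<close> \<open>0 \<le> integral {s - \<tau> s..s} DI\<close>
    by (intro mult_left_le_one_le) auto
  also have "\<dots> \<le> \<epsilon> + 2 * M * (Dmax * \<tau>max) / r\<^sup>2"
    using \<open>integral {s - \<tau> s..s} DI \<le> Dmax * \<tau>max\<close> \<open>0 \<le> M\<close>
    by (intro add_left_mono divide_right_mono mult_left_mono) auto
  finally show ?thesis .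
qed

lemma filterlim_delay_at_top: "filterlim (\<lambda>s. s - \<tau> s) at_top at_top"
proof (rule filterlim_at_top_mono[OF filterlim_tendsto_add_at_top[OF tendsto_const filterlim_ident]])
  show "eventually (\<lambda>s. - \<tau>max + s \<le> s - \<tau> s) at_top"
    using \<tau>_bounds(2) by simp
qed

lemma Rop_nonneg:
  assumes "\<And>z. 0 \<le> \<phi> z"
  shows "0 \<le> Rop DI dI \<tau> p h s \<phi> y"
  unfolding Rop_def using assms deriv_\<tau>_bounds(1) p_nonneg h_nonneg
  by (intro mult_nonneg_nonneg Gop_nonneg) auto

lemma mature_sol_nonneg:
  assumes sol: "mature_sol DM dM DI dI \<tau> p h w" and t: "0 \<le> t"
  shows "0 \<le> w t x"
proof -
  have w0: "0 \<le> w 0 y" for y using sol unfolding mature_sol_def by blast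
  txt \<open>Method of steps: up to time \<open>(n + 1) \<tau>min\<close> the delayed argument is at most
    \<open>n \<tau>min\<close>, or negative, where the birth rate vanishes.\<close>
  have "\<forall>t x. 0 \<le> t \<and> t \<le> real n * \<tau>min \<longrightarrow> 0 \<le> w t x" for n
  proof (induction n)
    case 0
    then show ?case using w0 by auto
  next
    case (Suc n)
    show ?case
    proof (intro allI impI)
      fix t x
      assume t: "0 \<le> t \<and> t \<le> real (Suc n) * \<tau>min"
      have "0 \<le> Gop DM dM t s (Rop DI dI \<tau> p h s (w (s - \<tau> s))) x" if s: "s \<in> {0..t}" for s
      proof (cases "s - \<tau> s < 0")
        case True
        then show ?thesis
          unfolding Rop_def using p_delay_zero s by (simp add: Gop_const)
      next
        case False
        have "s - \<tau> s \<le> real n * \<tau>min" using s t \<tau>_bounds(1)[of s] by (auto simp: algebra_simps)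
        with Suc.IH False show ?thesis by (intro Gop_nonneg Rop_nonneg) auto
      qed
      then have "0 \<le> integral {0..t} (\<lambda>s. Gop DM dM t s (Rop DI dI \<tau> p h s (w (s - \<tau> s))) x)"
        by (rule integral_nonneg_real)
      moreover have "0 \<le> Gop DM dM t 0 (w 0) x" using w0 by (rule Gop_nonneg)
      ultimately show "0 \<le> w t x"
        using sol t unfolding mature_sol_def by simp
    qed
  qed
  moreover obtain n where "t / \<tau>min \<le> real n" using real_arch_simple by blast
  ultimately show ?thesis using t \<tau>min_pos by (auto simp: pos_divide_le_eq)
qed

lemma Rop_diff_const_abs_le:
  assumes \<phi>: "continuous_on UNIV \<phi>" "\<And>z. 0 \<le> \<phi> z" and a: "0 \<le> a" and r: "0 < r"
    and near: "\<And>z. \<bar>z - y\<bar> \<le> r \<Longrightarrow> \<bar>h (\<phi> z) - h a\<bar> \<le> \<epsilon>"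
  shows "\<bar>Rop DI dI \<tau> p h s \<phi> y - Rop DI dI \<tau> p h s (\<lambda>_. a) 0\<bar>
    \<le> K * (P * \<epsilon> + 2 * (P * H) * (Dmax * \<tau>max) / r\<^sup>2)"
proof -
  define \<psi> where "\<psi> z = p (s - \<tau> s) * h (\<phi> z)" for z
  define c where "c = p (s - \<tau> s) * h a"
  have "continuous_on UNIV (\<lambda>z. h (\<phi> z))"
    using continuous_on_compose2[OF h_cont \<phi>(1)] \<phi>(2) by auto
  then have "\<psi> \<in> borel_measurable borel"
    unfolding \<psi>_def by (intro borel_measurable_continuous_onI continuous_intros)
  have \<psi>_bounds: "0 \<le> \<psi> z" "\<psi> z \<le> P * H" for z
    unfolding \<psi>_def using mult_mono[OF p_le h_le bounds_nonneg(3) h_nonneg] p_nonneg h_nonneg \<phi>(2)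
    by auto
  have c_bounds: "0 \<le> c" "c \<le> P * H"
    unfolding c_def using mult_mono[OF p_le h_le bounds_nonneg(3) h_nonneg] p_nonneg h_nonneg a
    by auto
  have "\<bar>\<psi> z\<bar> \<le> P * H" for z using \<psi>_bounds[of z] by simp
  from Gop_diff_const[OF \<open>\<psi> \<in> borel_measurable borel\<close> this]
  have "Rop DI dI \<tau> p h s \<phi> y - Rop DI dI \<tau> p h s (\<lambda>_. a) 0
      = (1 - deriv \<tau> s) * Gop DI dI s (s - \<tau> s) (\<lambda>z. \<psi> z - c) y"
    unfolding Rop_def \<psi>_def c_def by (simp add: Gop_const right_diff_distrib)
  moreover have "\<bar>Gop DI dI s (s - \<tau> s) (\<lambda>z. \<psi> z - c) y\<bar> \<le> P * \<epsilon> + 2 * (P * H) * (Dmax * \<tau>max) / r\<^sup>2"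
  proof (rule Gop_delay_abs_le_local[OF _ _ r])
    show "\<bar>\<psi> z - c\<bar> \<le> P * H" for z using \<psi>_bounds[of z] c_bounds by linarith
    fix z
    assume "\<bar>z - y\<bar> \<le> r"
    then have "p (s - \<tau> s) * \<bar>h (\<phi> z) - h a\<bar> \<le> P * \<epsilon>"
      using near p_nonneg p_le by (meson abs_ge_zero mult_mono order.trans)
    then show "\<bar>\<psi> z - c\<bar> \<le> P * \<epsilon>"
      unfolding \<psi>_def c_def using p_nonneg by (simp add: abs_mult right_diff_distrib[symmetric])
  qed
  ultimately show ?thesis
    using deriv_\<tau>_bounds[of s] by (simp add: abs_mult mult_mono')
qed

definition source :: "(real \<Rightarrow> real \<Rightarrow> real) \<Rightarrow> real \<Rightarrow> real \<Rightarrow> real" where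
  "source w s y = p s * h (w s y) - Rop DI dI \<tau> p h s (w (s - \<tau> s)) y"

lemma source_const_profile: "source (\<lambda>t _. U t) s y = source (\<lambda>t _. U t) s 0"
  unfolding source_def Rop_def by (simp add: Gop_const)

lemma source_zero: "source (\<lambda>_ _. 0) s y = 0"
  unfolding source_def Rop_def by (simp add: Gop_const h_0)

lemma delayed_birth_bounds:
  assumes sol: "mature_sol DM dM DI dI \<tau> p h w" and s: "0 \<le> s"
  shows "0 \<le> p (s - \<tau> s) * h (w (s - \<tau> s) z)" "p (s - \<tau> s) * h (w (s - \<tau> s) z) \<le> P * H"
proof -
  have "0 \<le> p (s - \<tau> s) * h (w (s - \<tau> s) z) \<and> p (s - \<tau> s) * h (w (s - \<tau> s) z) \<le> P * H"
  proof (cases "s - \<tau> s < 0")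
    case True
    then show ?thesis using p_delay_zero[OF s] bounds_nonneg by simp
  next
    case False
    then have "0 \<le> w (s - \<tau> s) z" using mature_sol_nonneg[OF sol] by simp
    then show ?thesis
      using mult_mono[OF p_le h_le bounds_nonneg(3) h_nonneg] p_nonneg h_nonneg by simp
  qed
  then show "0 \<le> p (s - \<tau> s) * h (w (s - \<tau> s) z)" "p (s - \<tau> s) * h (w (s - \<tau> s) z) \<le> P * H"
    by auto
qed

lemma source_abs_le:
  assumes sol: "mature_sol DM dM DI dI \<tau> p h w" and s: "0 \<le> s"
  shows "\<bar>source w s y\<bar> \<le> (1 + K) * (P * H)"
proof -
  have "\<bar>Gop DI dI s (s - \<tau> s) (\<lambda>z. p (s - \<tau> s) * h (w (s - \<tau> s) z)) y\<bar>
      \<le> exp (- integral {s - \<tau> s..s} dI) * (P * H)"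
    using delayed_birth_bounds[OF sol s] by (intro Gop_abs_le) simp
  also have "\<dots> \<le> P * H"
    using exp_integral_dI_le_1 bounds_nonneg by (intro mult_left_le_one_le) auto
  finally have "\<bar>Gop DI dI s (s - \<tau> s) (\<lambda>z. p (s - \<tau> s) * h (w (s - \<tau> s) z)) y\<bar> \<le> P * H" .
  then have "\<bar>Rop DI dI \<tau> p h s (w (s - \<tau> s)) y\<bar> \<le> K * (P * H)"
    unfolding Rop_def abs_mult using deriv_\<tau>_bounds bounds_nonneg
    by (intro mult_mono) auto
  moreover have "\<bar>p s * h (w s y)\<bar> \<le> P * H"
    using mult_mono[OF p_le h_le bounds_nonneg(3) h_nonneg] mature_sol_nonneg[OF sol s] p_nonneg h_nonneg
    by (simp add: abs_mult)
  ultimately show ?thesis unfolding source_def by (simp add: algebra_simps)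
qed

text \<open>Clamping time at \<open>0\<close> makes a solution continuous on the whole plane, as the
  measurability argument needs; for \<open>s \<ge> 0\<close> it does not change the source term, because
  \<open>p\<close> vanishes at negative delayed times.\<close>

lemma source_clamped_eq:
  assumes sol: "mature_sol DM dM DI dI \<tau> p h w" and s: "0 \<le> s"
  shows "source (\<lambda>s. w (max s 0)) s = source w s"
proof -
  have "(\<lambda>z. p (s - \<tau> s) * h (w (max (s - \<tau> s) 0) z)) = (\<lambda>z. p (s - \<tau> s) * h (w (s - \<tau> s) z))"
    using p_delay_zero[OF s] by (cases "s - \<tau> s < 0") auto
  then show ?thesis
    using s unfolding source_def Rop_def by simp
qed

lemma source_clamped_measurable:
  assumes sol: "mature_sol DM dM DI dI \<tau> p h w"
  shows "(\<lambda>(s, y). source (\<lambda>s. w (max s 0)) s y) \<in> borel_measurable (borel \<Otimes>\<^sub>M borel)"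
proof -
  have hw: "continuous_on UNIV (\<lambda>(s, y). h (w (max s 0) y))"
    using continuous_on_compose2[OF h_cont mature_sol_continuous_clamped[OF sol]]
      mature_sol_nonneg[OF sol] by (force simp: case_prod_beta')
  have "continuous_on UNIV (\<lambda>q. p (fst q) * (\<lambda>(s, y). h (w (max s 0) y)) q)"
    using hw by (intro continuous_intros continuous_on_compose2[OF p_cont]) auto
  then have [measurable]: "(\<lambda>(s, y). p s * h (w (max s 0) y)) \<in> borel_measurable (borel \<Otimes>\<^sub>M borel)"
    by (simp add: borel_measurable_pair_continuous_on case_prod_beta')
  have delay_cont: "continuous_on UNIV (\<lambda>s. s - \<tau> s)"
    using \<tau>_cont by (intro continuous_intros)
  have "continuous_on UNIV (\<lambda>q. p (fst q - \<tau> (fst q)) * (\<lambda>(s, y). h (w (max s 0) y)) (fst q - \<tau> (fst q), snd q))"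
    by (intro continuous_intros continuous_on_compose2[OF p_cont] continuous_on_compose2[OF hw]
        continuous_on_compose2[OF \<tau>_cont]) auto
  then have "(\<lambda>(s, z). p (s - \<tau> s) * h (w (max (s - \<tau> s) 0) z)) \<in> borel_measurable (borel \<Otimes>\<^sub>M borel)"
    by (simp add: borel_measurable_pair_continuous_on case_prod_beta')
  from Gop_measurable[OF DI_cont dI_cont delay_cont continuous_on_id this]
  have [measurable]: "(\<lambda>(s, y). Gop DI dI s (s - \<tau> s) (\<lambda>z. p (s - \<tau> s) * h (w (max (s - \<tau> s) 0) z)) y)
      \<in> borel_measurable (borel \<Otimes>\<^sub>M borel)" by simp
  have [measurable]: "deriv \<tau> \<in> borel_measurable borel"
    using deriv_\<tau>_cont by (rule borel_measurable_continuous_onI)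
  show ?thesis
    unfolding source_def Rop_def by measurable
qed

lemma source_measurable:
  assumes sol: "mature_sol DM dM DI dI \<tau> p h w" and s: "0 \<le> s"
  shows "source w s \<in> borel_measurable borel"
proof -
  have "(\<lambda>y. (s, y)) \<in> borel \<rightarrow>\<^sub>M borel \<Otimes>\<^sub>M borel" by simp
  from measurable_compose[OF this source_clamped_measurable[OF sol]]
  have "(\<lambda>y. source (\<lambda>s. w (max s 0)) s y) \<in> borel_measurable borel" by (simp only: prod.case)
  then show ?thesis unfolding source_clamped_eq[OF sol s] .
qed

lemma source_diff_abs_le:
  assumes sol: "mature_sol DM dM DI dI \<tau> p h u" and s: "0 \<le> s - \<tau> s" and U: "0 \<le> U (s - \<tau> s)"
    and r: "0 < r" and here: "\<bar>h (u s y) - h (U s)\<bar> \<le> \<epsilon>"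
    and near: "\<And>z. \<bar>z - y\<bar> \<le> r \<Longrightarrow> \<bar>h (u (s - \<tau> s) z) - h (U (s - \<tau> s))\<bar> \<le> \<epsilon>"
  shows "\<bar>source u s y - source (\<lambda>t _. U t) s 0\<bar>
    \<le> (1 + K) * (P * \<epsilon>) + K * (2 * (P * H) * (Dmax * \<tau>max) / r\<^sup>2)"
proof -
  have "p s * \<bar>h (u s y) - h (U s)\<bar> \<le> P * \<epsilon>"
    using here p_le p_nonneg by (meson abs_ge_zero mult_mono order.trans)
  then have "\<bar>p s * h (u s y) - p s * h (U s)\<bar> \<le> P * \<epsilon>"
    using p_nonneg[of s] by (simp add: abs_mult flip: right_diff_distrib)
  moreover have "\<bar>Rop DI dI \<tau> p h s (u (s - \<tau> s)) y - Rop DI dI \<tau> p h s (\<lambda>_. U (s - \<tau> s)) 0\<bar>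
      \<le> K * (P * \<epsilon> + 2 * (P * H) * (Dmax * \<tau>max) / r\<^sup>2)"
    using mature_sol_continuous_at[OF sol s] mature_sol_nonneg[OF sol s] U r near
    by (intro Rop_diff_const_abs_le) auto
  ultimately show ?thesis
    unfolding source_def by (simp add: algebra_simps)
qed

lemma uniformly_small_if_Sup_tendsto_0:
  assumes sol: "mature_sol DM dM DI dI \<tau> p h u" and U: "\<And>s. \<bar>U s\<bar> \<le> Ub"
    and lim: "((\<lambda>t. Sup {\<bar>u t x - U t\<bar> | x. X t x}) \<longlongrightarrow> 0) at_top" and "0 < \<epsilon>"
  shows "eventually (\<lambda>t. \<forall>x. X t x \<longrightarrow> \<bar>u t x - U t\<bar> \<le> \<epsilon>) at_top"
proof (rule eventually_le_if_Sup_tendsto_0[OF lim _ \<open>0 < \<epsilon>\<close>])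
  show "eventually (\<lambda>t. bdd_above {\<bar>u t x - U t\<bar> | x. X t x}) at_top"
    using eventually_ge_at_top[of 0]
  proof eventually_elim
    case (elim t)
    obtain B where B: "\<And>s x. 0 \<le> s \<Longrightarrow> s \<le> t \<Longrightarrow> \<bar>u s x\<bar> \<le> B"
      using mature_sol_bounded_on[OF sol, where t = t] by blast
    then have "\<bar>u t x\<bar> \<le> B" for x using elim by simp
    then have "\<bar>u t x - U t\<bar> \<le> B + Ub" for x using U[of t] abs_triangle_ineq4[of "u t x" "U t"]
      by (meson add_mono order_trans)
    then show ?case by (intro bdd_aboveI) auto
  qed
qed

lemma source_converges:
  fixes u :: "real \<Rightarrow> real \<Rightarrow> real" and U :: "real \<Rightarrow> real" and Near Inner :: "real \<Rightarrow> real \<Rightarrow> bool"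
  assumes sol: "mature_sol DM dM DI dI \<tau> p h u"
    and U: "\<And>s. 0 \<le> s \<Longrightarrow> 0 \<le> U s" "\<And>s. U s \<le> Ub"
    and conv: "\<And>\<epsilon>. 0 < \<epsilon> \<Longrightarrow> eventually (\<lambda>s. \<forall>y. Near s y \<longrightarrow> \<bar>u s y - U s\<bar> \<le> \<epsilon>) at_top"
    and \<kappa>: "0 < \<kappa>"
    and geom: "eventually (\<lambda>s. \<forall>y z. Inner s y \<longrightarrow> \<bar>z - y\<bar> \<le> \<kappa> * s \<longrightarrow> Near s y \<and> Near (s - \<tau> s) z) at_top"
    and e: "0 < e"
  shows "eventually (\<lambda>s. \<forall>y. Inner s y \<longrightarrow> \<bar>source u s y - source (\<lambda>t _. U t) s 0\<bar> \<le> e) at_top"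
proof -
  define e1 where "e1 = e / (2 * ((1 + K) * P + 1))"
  have "0 \<le> (1 + K) * P" using bounds_nonneg by simp
  then have "0 < e1" and e1: "(1 + K) * (P * e1) \<le> e / 2"
    unfolding e1_def using e by (simp_all add: field_simps)
  obtain \<eta> where "0 < \<eta>"
    and \<eta>: "\<And>z z'. 0 \<le> z \<Longrightarrow> z \<le> Ub \<Longrightarrow> 0 \<le> z' \<Longrightarrow> \<bar>z' - z\<bar> < \<eta> \<Longrightarrow> \<bar>h z' - h z\<bar> < e1"
    using continuous_on_ray_uniformly_near[OF h_cont \<open>0 < e1\<close>] by metis
  have close: "\<bar>h (u s y) - h (U s)\<bar> \<le> e1" if "0 \<le> s" "\<bar>u s y - U s\<bar> \<le> \<eta> / 2" for s y
    using \<eta>[of "U s" "u s y"] that U mature_sol_nonneg[OF sol] \<open>0 < \<eta>\<close> by force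
  define C where "C = K * (2 * (P * H) * (Dmax * \<tau>max) / \<kappa>\<^sup>2)"
  have "((\<lambda>s. C / s\<^sup>2) \<longlongrightarrow> 0) at_top" by real_asymp
  then have "eventually (\<lambda>s. C / s\<^sup>2 < e / 2) at_top"
    using e by (intro order_tendstoD(2)) auto
  moreover have "\<forall>\<^sub>F s in at_top. \<forall>y. Near s y \<longrightarrow> \<bar>u s y - U s\<bar> \<le> \<eta> / 2"
    using \<open>0 < \<eta>\<close> by (intro conv) simp
  moreover from eventually_compose_filterlim[OF this filterlim_delay_at_top]
  have "\<forall>\<^sub>F s in at_top. \<forall>z. Near (s - \<tau> s) z \<longrightarrow> \<bar>u (s - \<tau> s) z - U (s - \<tau> s)\<bar> \<le> \<eta> / 2" .
  moreover have "\<forall>\<^sub>F s in at_top. 0 \<le> s - \<tau> s"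
    using filterlim_delay_at_top unfolding filterlim_at_top by blast
  ultimately show ?thesis
    using geom
  proof eventually_elim
    case (elim s)
    have "0 < s" using elim(4) \<tau>_pos[of s] by linarith
    have bound: "\<bar>source u s y - source (\<lambda>t _. U t) s 0\<bar> \<le> (1 + K) * (P * e1) + C / s\<^sup>2"
      if "Inner s y" for y
    proof -
      have "Near s y"
        using elim(5) that \<kappa> \<open>0 < s\<close> by (metis abs_zero diff_self less_imp_le mult_nonneg_nonneg)
      have "\<bar>source u s y - source (\<lambda>t _. U t) s 0\<bar>
          \<le> (1 + K) * (P * e1) + K * (2 * (P * H) * (Dmax * \<tau>max) / (\<kappa> * s)\<^sup>2)"
        using close[of s y] close[OF elim(4)] elim(2,3,5) \<open>Near s y\<close> that U(1) elim(4) \<kappa> \<open>0 < s\<close>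
        by (intro source_diff_abs_le[OF sol]) auto
      then show ?thesis unfolding C_def by (simp add: power_mult_distrib)
    qed
    show ?case
    proof (intro allI impI)
      fix y
      assume "Inner s y"
      from bound[OF this] e1 elim(1)
      show "\<bar>source u s y - source (\<lambda>t _. U t) s 0\<bar> \<le> e" by linarith
    qed
  qed
qed

lemma source_small_outside:
  assumes sol: "mature_sol DM dM DI dI \<tau> p h u" and c1: "0 \<le> c1" "c1 < c2"
    and u_out: "((\<lambda>t. Sup {u t x | x. c1 * t \<le> \<bar>x\<bar>}) \<longlongrightarrow> 0) at_top" and "0 < \<epsilon>"
  shows "eventually (\<lambda>s. \<forall>y. c2 * s \<le> \<bar>y\<bar> \<longrightarrow> \<bar>source u s y\<bar> \<le> \<epsilon>) at_top"
proof -
  have "eventually (\<lambda>t. Sup {u t x | x. c1 * t \<le> \<bar>x\<bar>} = Sup {\<bar>u t x - 0\<bar> | x. c1 * t \<le> \<bar>x\<bar>}) at_top"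
    using eventually_ge_at_top[of 0] by eventually_elim (simp add: mature_sol_nonneg[OF sol])
  with u_out have "((\<lambda>t. Sup {\<bar>u t x - 0\<bar> | x. c1 * t \<le> \<bar>x\<bar>}) \<longlongrightarrow> 0) at_top"
    by (rule tendsto_cong[THEN iffD1, rotated])
  then have u_small: "eventually (\<lambda>s. \<forall>y. c1 * s \<le> \<bar>y\<bar> \<longrightarrow> \<bar>u s y - 0\<bar> \<le> \<epsilon>') at_top"
    if "0 < \<epsilon>'" for \<epsilon>'
    using uniformly_small_if_Sup_tendsto_0[OF sol, of "\<lambda>_. 0" 0] that by simp
  have "eventually (\<lambda>s. \<forall>y z. c2 * s \<le> \<bar>y\<bar> \<longrightarrow> \<bar>z - y\<bar> \<le> (c2 - c1) * s \<longrightarrow>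
      c1 * s \<le> \<bar>y\<bar> \<and> c1 * (s - \<tau> s) \<le> \<bar>z\<bar>) at_top"
    using eventually_ge_at_top[of 0]
  proof eventually_elim
    case (elim s)
    have "c1 * (s - \<tau> s) \<le> c1 * s" "c1 * s \<le> c2 * s"
      using elim c1 \<tau>_pos[of s] by (auto intro: mult_left_mono mult_right_mono)
    then show ?case by (auto simp: algebra_simps)
  qed
  then show ?thesis
    using source_converges[OF sol, where U = "\<lambda>_. 0" and Ub = 0 and \<kappa> = "c2 - c1"
        and Near = "\<lambda>s y. c1 * s \<le> \<bar>y\<bar>" and Inner = "\<lambda>s y. c2 * s \<le> \<bar>y\<bar>", OF _ _ u_small _ _ \<open>0 < \<epsilon>\<close>] c1
    by (simp add: source_zero)
qed

lemma source_close_inside: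
  assumes sol: "mature_sol DM dM DI dI \<tau> p h u" and sol_U: "mature_sol DM' dM' DI dI \<tau> p h (\<lambda>t _. U t)"
    and Ub: "\<And>s. \<bar>U s\<bar> \<le> Ub" and c: "0 < c2" "c2 < c1"
    and u_in: "((\<lambda>t. Sup {\<bar>u t x - U t\<bar> | x. \<bar>x\<bar> \<le> c1 * t}) \<longlongrightarrow> 0) at_top" and "0 < \<epsilon>"
  shows "eventually (\<lambda>s. \<forall>y. \<bar>y\<bar> \<le> c2 * s \<longrightarrow> \<bar>source u s y - source (\<lambda>t _. U t) s 0\<bar> \<le> \<epsilon>) at_top"
proof -
  define \<kappa> where "\<kappa> = (c1 - c2) / 2"
  have "0 < \<kappa>" unfolding \<kappa>_def using c by simp
  have "eventually (\<lambda>s. \<forall>y z. \<bar>y\<bar> \<le> c2 * s \<longrightarrow> \<bar>z - y\<bar> \<le> \<kappa> * s \<longrightarrow>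
      \<bar>y\<bar> \<le> c1 * s \<and> \<bar>z\<bar> \<le> c1 * (s - \<tau> s)) at_top"
    using eventually_ge_at_top[of "max 0 (c1 * \<tau>max / \<kappa>)"]
  proof eventually_elim
    case (elim s)
    then have "0 \<le> s" "c1 * \<tau>max \<le> \<kappa> * s"
      using \<open>0 < \<kappa>\<close> by (auto simp: pos_divide_le_eq mult.commute)
    moreover have "c1 * \<tau> s \<le> c1 * \<tau>max"
      using c \<tau>_bounds(2)[of s] by (intro mult_left_mono) auto
    moreover have "c2 * s \<le> c1 * s" using \<open>0 \<le> s\<close> c by (intro mult_right_mono) auto
    moreover have "c2 * s + \<kappa> * s = c1 * s - \<kappa> * s" unfolding \<kappa>_def by (simp add: field_simps)
    ultimately show ?case by (auto simp: algebra_simps)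
  qed
  moreover have "eventually (\<lambda>s. \<forall>y. \<bar>y\<bar> \<le> c1 * s \<longrightarrow> \<bar>u s y - U s\<bar> \<le> \<epsilon>') at_top" if "0 < \<epsilon>'" for \<epsilon>'
    by (rule uniformly_small_if_Sup_tendsto_0[OF sol Ub u_in that])
  ultimately show ?thesis
    using source_converges[OF sol, where U = U and Ub = Ub and \<kappa> = \<kappa>
        and Near = "\<lambda>s y. \<bar>y\<bar> \<le> c1 * s" and Inner = "\<lambda>s y. \<bar>y\<bar> \<le> c2 * s",
        OF _ abs_le_D1[OF Ub] _ \<open>0 < \<kappa>\<close> _ \<open>0 < \<epsilon>\<close>] mature_sol_nonneg[OF sol_U]
    by blast
qed

subsection \<open>Duhamel's formula for the immature population\<close>

lemma Duhamel_integrable: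
  assumes sol: "mature_sol DM dM DI dI \<tau> p h w" and t: "0 \<le> t"
  shows "(\<lambda>s. Gop DI dI t s (source w s) x) integrable_on {0..t}"
proof -
  define g where "g s = Gop DI dI t s (source (\<lambda>s. w (max s 0)) s) x" for s
  have "(\<lambda>s. (s, x)) \<in> borel \<rightarrow>\<^sub>M borel \<Otimes>\<^sub>M borel" by simp
  from measurable_compose[OF this Gop_measurable[OF DI_cont dI_cont continuous_on_id
        continuous_on_const[of _ t] source_clamped_measurable[OF sol]]]
  have "g \<in> borel_measurable borel"
    unfolding g_def by (simp only: prod.case)
  then have meas: "g \<in> borel_measurable (lebesgue_on {0..t})"
    using measurable_comp[OF id_borel_measurable_lebesgue_on] by (simp add: comp_def)
  have eq: "g s = Gop DI dI t s (source w s) x" if "s \<in> {0..t}" for s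
  proof -
    have "0 \<le> s" using that by simp
    then show ?thesis by (simp only: g_def source_clamped_eq[OF sol])
  qed
  have bound: "\<bar>g s\<bar> \<le> (1 + K) * (P * H)" if "s \<in> {0..t}" for s
  proof -
    have "\<bar>Gop DI dI t s (source w s) x\<bar> \<le> exp (- integral {s..t} dI) * ((1 + K) * (P * H))"
      using source_abs_le[OF sol] that by (intro Gop_abs_le) auto
    also have "\<dots> \<le> (1 + K) * (P * H)"
      using exp_integral_dI_le_1 bounds_nonneg by (intro mult_left_le_one_le) auto
    finally show ?thesis using eq[OF that] by simp
  qed
  have "(\<lambda>_. (1 + K) * (P * H)) integrable_on {0..t}"
    by (rule integrable_continuous_interval) (rule continuous_on_const)
  from measurable_bounded_by_integrable_imp_integrable_real[OF meas this bound]
  have "g integrable_on {0..t}" by simp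
  then show ?thesis using eq by (rule integrable_eq)
qed

lemma Duhamel_diff_const_profile:
  assumes sol: "mature_sol DM dM DI dI \<tau> p h u" and sol_U: "mature_sol DM' dM' DI dI \<tau> p h (\<lambda>t _. U t)"
    and t: "0 \<le> t"
  shows "integral {0..t} (\<lambda>s. Gop DI dI t s (source u s) x)
      - integral {0..t} (\<lambda>s. exp (- integral {s..t} dI) * source (\<lambda>t _. U t) s 0)
    = integral {0..t} (\<lambda>s. Gop DI dI t s (\<lambda>y. source u s y - source (\<lambda>t _. U t) s 0) x)"
proof -
  have Gop_U: "Gop DI dI t s (source (\<lambda>t _. U t) s) x = exp (- integral {s..t} dI) * source (\<lambda>t _. U t) s 0"
    for s
  proof -
    have "Gop DI dI t s (source (\<lambda>t _. U t) s) x = Gop DI dI t s (\<lambda>_. source (\<lambda>t _. U t) s 0) x"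
      by (rule arg_cong[where f = "\<lambda>\<phi>. Gop DI dI t s \<phi> x"], rule ext, rule source_const_profile)
    then show ?thesis by (simp only: Gop_const)
  qed
  have int_U: "(\<lambda>s. exp (- integral {s..t} dI) * source (\<lambda>t _. U t) s 0) integrable_on {0..t}"
    by (rule integrable_eq[OF Duhamel_integrable[OF sol_U t, of x]]) (rule Gop_U)
  have "integral {0..t} (\<lambda>s. Gop DI dI t s (source u s) x)
      - integral {0..t} (\<lambda>s. exp (- integral {s..t} dI) * source (\<lambda>t _. U t) s 0)
    = integral {0..t} (\<lambda>s. Gop DI dI t s (source u s) x - exp (- integral {s..t} dI) * source (\<lambda>t _. U t) s 0)"
    using integral_diff[OF Duhamel_integrable[OF sol t] int_U] by simp
  also have "\<dots> = integral {0..t} (\<lambda>s. Gop DI dI t s (\<lambda>y. source u s y - source (\<lambda>t _. U t) s 0) x)"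
  proof (rule integral_cong)
    fix s
    assume "s \<in> {0..t}"
    then have s: "0 \<le> s" by simp
    show "Gop DI dI t s (source u s) x - exp (- integral {s..t} dI) * source (\<lambda>t _. U t) s 0
      = Gop DI dI t s (\<lambda>y. source u s y - source (\<lambda>t _. U t) s 0) x"
      by (rule Gop_diff_const[OF source_measurable[OF sol s] source_abs_le[OF sol s], symmetric])
  qed
  finally show ?thesis .
qed

lemma Duhamel_abs_le:
  assumes t: "0 \<le> t" and \<theta>: "0 \<le> \<theta>" and r: "0 < r" and \<epsilon>: "0 \<le> \<epsilon>" and g0: "\<And>y. \<bar>g0 y\<bar> \<le> V"
    and bound: "\<And>s y. s \<in> {0..t} \<Longrightarrow> \<bar>f s y\<bar> \<le> M"
    and near: "\<And>s y. s \<in> {\<theta> * t..t} \<Longrightarrow> \<bar>y - x\<bar> \<le> r \<Longrightarrow> \<bar>f s y\<bar> \<le> \<epsilon>"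
  shows "\<bar>Gop DI dI t 0 g0 x + integral {0..t} (\<lambda>s. Gop DI dI t s (f s) x)\<bar>
    \<le> exp (- \<delta> * t) * V + \<epsilon> / \<delta> + (2 * M * Dmax / (\<delta> * r\<^sup>2) + M * exp (- \<delta> * ((1 - \<theta>) * t))) * t"
proof -
  have "0 \<le> M" using bound[of 0 0] t by (meson abs_ge_zero atLeastAtMost_iff order.trans order_refl)
  have "\<bar>integral {0..t} (\<lambda>s. Gop DI dI t s (f s) x)\<bar>
      \<le> \<epsilon> / \<delta> + (2 * M * Dmax / (\<delta> * r\<^sup>2) + M * exp (- \<delta> * ((1 - \<theta>) * t))) * t"
  proof (rule integral_abs_le_exp_decay[OF \<delta>_pos t \<epsilon>])
    show "0 \<le> 2 * M * Dmax / (\<delta> * r\<^sup>2) + M * exp (- \<delta> * ((1 - \<theta>) * t))"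
      using \<open>0 \<le> M\<close> bounds_nonneg \<delta>_pos by simp
    fix s
    assume s: "s \<in> {0..t}"
    show "\<bar>Gop DI dI t s (f s) x\<bar>
      \<le> exp (- \<delta> * (t - s)) * \<epsilon> + (2 * M * Dmax / (\<delta> * r\<^sup>2) + M * exp (- \<delta> * ((1 - \<theta>) * t)))"
    proof (cases "\<theta> * t \<le> s")
      case True
      with s have "\<bar>Gop DI dI t s (f s) x\<bar> \<le> exp (- \<delta> * (t - s)) * \<epsilon> + 2 * M * Dmax / (\<delta> * r\<^sup>2)"
        by (intro Gop_DI_abs_le_local bound near r) auto
      then show ?thesis using \<open>0 \<le> M\<close> by (smt (verit) exp_gt_zero mult_nonneg_nonneg)
    next
      case False
      with s have "\<bar>Gop DI dI t s (f s) x\<bar> \<le> exp (- \<delta> * (t - s)) * M"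
        by (intro Gop_DI_abs_le bound) auto
      also have "\<dots> \<le> exp (- \<delta> * ((1 - \<theta>) * t)) * M"
        using False \<delta>_pos \<open>0 \<le> M\<close> by (intro mult_right_mono) (auto simp: algebra_simps)
      finally show ?thesis
        using \<open>0 \<le> M\<close> \<epsilon> bounds_nonneg \<delta>_pos by (simp add: mult.commute add_increasing)
    qed
  qed
  moreover have "\<bar>Gop DI dI t 0 g0 x\<bar> \<le> exp (- \<delta> * t) * V"
    using Gop_DI_abs_le[of 0 t g0 V x] g0 t by simp
  ultimately show ?thesis by (smt (verit) abs_triangle_ineq)
qed

lemma Duhamel_uniformly_small:
  fixes f :: "real \<Rightarrow> real \<Rightarrow> real" and X G :: "real \<Rightarrow> real \<Rightarrow> bool"
  assumes g0: "\<And>y. \<bar>g0 y\<bar> \<le> V" and bound: "\<And>s y. 0 \<le> s \<Longrightarrow> \<bar>f s y\<bar> \<le> M"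
    and small: "\<And>\<epsilon>. 0 < \<epsilon> \<Longrightarrow> eventually (\<lambda>s. \<forall>y. G s y \<longrightarrow> \<bar>f s y\<bar> \<le> \<epsilon>) at_top"
    and \<theta>: "0 < \<theta>" "\<theta> < 1" and \<kappa>: "0 < \<kappa>"
    and cone: "\<And>t s x y. 1 \<le> t \<Longrightarrow> X t x \<Longrightarrow> \<theta> * t \<le> s \<Longrightarrow> s \<le> t \<Longrightarrow> \<bar>y - x\<bar> \<le> \<kappa> * t \<Longrightarrow> G s y"
    and e: "0 < e"
  shows "eventually (\<lambda>t. \<forall>x. X t x \<longrightarrow>
    \<bar>Gop DI dI t 0 g0 x + integral {0..t} (\<lambda>s. Gop DI dI t s (f s) x)\<bar> \<le> e) at_top"
proof -
  define \<epsilon> where "\<epsilon> = \<delta> * e / 2"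
  have "0 < \<epsilon>" unfolding \<epsilon>_def using \<delta>_pos e by simp
  from small[OF this] obtain S where S: "\<And>s y. S \<le> s \<Longrightarrow> G s y \<Longrightarrow> \<bar>f s y\<bar> \<le> \<epsilon>"
    unfolding eventually_at_top_linorder by blast
  define rate where "rate = \<delta> * (1 - \<theta>)"
  define B where "B t = e / 2
    + (exp (- \<delta> * t) * V + (2 * M * Dmax / (\<delta> * (\<kappa> * t)\<^sup>2) + M * exp (- rate * t)) * t)" for t
  have "0 < rate" unfolding rate_def using \<delta>_pos \<theta> by simp
  then have "((\<lambda>t. exp (- \<delta> * t) * V + (2 * M * Dmax / (\<delta> * (\<kappa> * t)\<^sup>2) + M * exp (- rate * t)) * t)
      \<longlongrightarrow> 0) at_top"
    using \<delta>_pos \<kappa> by real_asymp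
  then have "(B \<longlongrightarrow> e / 2 + 0) at_top"
    unfolding B_def by (intro tendsto_add tendsto_const)
  then have "eventually (\<lambda>t. B t < e) at_top"
    by (rule order_tendstoD(2)) (use e in simp)
  moreover have "eventually (\<lambda>t. max 1 (S / \<theta>) \<le> t) at_top"
    by (rule eventually_ge_at_top)
  ultimately show ?thesis
  proof eventually_elim
    case (elim t)
    then have t: "1 \<le> t" "S \<le> \<theta> * t" using \<theta> by (auto simp: pos_divide_le_eq mult.commute)
    have "\<bar>Gop DI dI t 0 g0 x + integral {0..t} (\<lambda>s. Gop DI dI t s (f s) x)\<bar> \<le> B t" if "X t x" for x
    proof -
      have "\<bar>Gop DI dI t 0 g0 x + integral {0..t} (\<lambda>s. Gop DI dI t s (f s) x)\<bar>
          \<le> exp (- \<delta> * t) * V + \<epsilon> / \<delta>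
            + (2 * M * Dmax / (\<delta> * (\<kappa> * t)\<^sup>2) + M * exp (- \<delta> * ((1 - \<theta>) * t))) * t"
        using t \<theta> \<kappa> \<open>0 < \<epsilon>\<close> that by (intro Duhamel_abs_le g0 bound) (auto intro!: S cone)
      also have "\<dots> = B t"
        unfolding B_def rate_def \<epsilon>_def using \<delta>_pos by (simp add: algebra_simps)
      finally show ?thesis .
    qed
    then show ?case using elim(1) by force
  qed
qed

lemma spreading_outside:
  assumes sol: "mature_sol DM dM DI dI \<tau> p h u" and k: "0 \<le> k" "k < c"
    and u_out: "\<And>c'. k < c' \<Longrightarrow> ((\<lambda>t. Sup {u t x | x. c' * t \<le> \<bar>x\<bar>}) \<longlongrightarrow> 0) at_top"
    and v0: "bounded (range (v 0))"
    and v: "\<And>t x. 0 \<le> t \<Longrightarrow> v t x = Gop DI dI t 0 (v 0) x + integral {0..t} (\<lambda>s. Gop DI dI t s (source u s) x)"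
  shows "((\<lambda>t. Sup {v t x | x. c * t \<le> \<bar>x\<bar>}) \<longlongrightarrow> 0) at_top"
proof (rule Sup_tendsto_0_if_uniformly_small)
  define c1 where "c1 = (2 * k + c) / 3"
  define c2 where "c2 = (k + 2 * c) / 3"
  have c: "k < c1" "c1 < c2" "c2 < c" unfolding c1_def c2_def using k by auto
  obtain V where V: "\<And>y. \<bar>v 0 y\<bar> \<le> V" using v0 unfolding bounded_iff by auto
  fix e :: real
  assume "0 < e"
  have "eventually (\<lambda>t. \<forall>x. c * t \<le> \<bar>x\<bar> \<longrightarrow>
      \<bar>Gop DI dI t 0 (v 0) x + integral {0..t} (\<lambda>s. Gop DI dI t s (source u s) x)\<bar> \<le> e) at_top"
  proof (rule Duhamel_uniformly_small[OF V source_abs_le[OF sol]])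
    show "eventually (\<lambda>s. \<forall>y. c2 * s \<le> \<bar>y\<bar> \<longrightarrow> \<bar>source u s y\<bar> \<le> \<epsilon>) at_top" if "0 < \<epsilon>" for \<epsilon>
      using k c by (intro source_small_outside[OF sol _ _ u_out that]) auto
    show "0 < (1 :: real) / 2" "(1 :: real) / 2 < 1" "0 < c - c2" "0 < e" using c \<open>0 < e\<close> by auto
    fix t s x y
    assume "1 \<le> t" "c * t \<le> \<bar>x\<bar>" "1 / 2 * t \<le> s" "s \<le> t" "\<bar>y - x\<bar> \<le> (c - c2) * t"
    moreover have "c2 * s \<le> c2 * t" using \<open>s \<le> t\<close> k c by (intro mult_left_mono) auto
    ultimately show "c2 * s \<le> \<bar>y\<bar>" by (auto simp: algebra_simps)
  qed
  with eventually_ge_at_top[of 0]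
  show "eventually (\<lambda>t. \<forall>x. c * t \<le> \<bar>x\<bar> \<longrightarrow> \<bar>v t x\<bar> \<le> e) at_top"
    by eventually_elim (simp add: v)
next
  show "eventually (\<lambda>t. \<exists>x. c * t \<le> \<bar>x\<bar>) at_top"
  proof (intro always_eventually allI)
    show "\<exists>x. c * t \<le> \<bar>x\<bar>" for t by (rule exI[of _ "c * t"]) simp
  qed
qed

lemma spreading_inside:
  assumes sol: "mature_sol DM dM DI dI \<tau> p h u"
    and sol_U: "mature_sol DM dM DI dI \<tau> p h (\<lambda>t _. U t)" "periodic_with T U" "0 < T"
    and k: "0 < c" "c < k"
    and u_in: "\<And>c'. 0 < c' \<and> c' < k \<Longrightarrow> ((\<lambda>t. Sup {\<bar>u t x - U t\<bar> | x. \<bar>x\<bar> \<le> c' * t}) \<longlongrightarrow> 0) at_top"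
    and v0: "bounded (range (v 0))"
    and v: "\<And>t x. 0 \<le> t \<Longrightarrow> v t x = Gop DI dI t 0 (v 0) x + integral {0..t} (\<lambda>s. Gop DI dI t s (source u s) x)"
  shows "((\<lambda>t. Sup {\<bar>v t x - vbar DI dI \<tau> p h U t\<bar> | x. \<bar>x\<bar> \<le> c * t}) \<longlongrightarrow> 0) at_top"
proof (rule Sup_tendsto_0_if_uniformly_small)
  define c1 where "c1 = (c + 2 * k) / 3"
  define c2 where "c2 = (2 * c + k) / 3"
  define \<theta> where "\<theta> = (c + c2) / (2 * c2)"
  have c: "c < c2" "c2 < c1" "c1 < k" unfolding c1_def c2_def using k by auto
  obtain V where V: "\<And>y. \<bar>v 0 y\<bar> \<le> V" using v0 unfolding bounded_iff by auto
  obtain Ub where Ub: "\<And>s. \<bar>U s\<bar> \<le> Ub" using mature_sol_periodic_bounded[OF sol_U] by blast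
  have bound: "\<bar>source u s y - source (\<lambda>t _. U t) s 0\<bar> \<le> 2 * ((1 + K) * (P * H))" if "0 \<le> s" for s y
    using source_abs_le[OF sol that, of y] source_abs_le[OF sol_U(1) that, of 0] by linarith
  fix e :: real
  assume "0 < e"
  have "eventually (\<lambda>t. \<forall>x. \<bar>x\<bar> \<le> c * t \<longrightarrow> \<bar>Gop DI dI t 0 (v 0) x
      + integral {0..t} (\<lambda>s. Gop DI dI t s (\<lambda>y. source u s y - source (\<lambda>t _. U t) s 0) x)\<bar> \<le> e) at_top"
  proof (rule Duhamel_uniformly_small[OF V bound])
    show "eventually (\<lambda>s. \<forall>y. \<bar>y\<bar> \<le> c2 * s \<longrightarrow> \<bar>source u s y - source (\<lambda>t _. U t) s 0\<bar> \<le> \<epsilon>) at_top"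
      if "0 < \<epsilon>" for \<epsilon>
      using k c by (intro source_close_inside[OF sol sol_U(1) Ub _ _ u_in that]) auto
    show "0 < \<theta>" "\<theta> < 1" "0 < (c2 - c) / 2" "0 < e"
      unfolding \<theta>_def using k c \<open>0 < e\<close> by (auto simp: field_simps)
    fix t s x y
    assume "1 \<le> t" "\<bar>x\<bar> \<le> c * t" "\<theta> * t \<le> s" "s \<le> t" "\<bar>y - x\<bar> \<le> (c2 - c) / 2 * t"
    moreover have "c * t + (c2 - c) / 2 * t = c2 * (\<theta> * t)"
      unfolding \<theta>_def using k c by (simp add: field_simps)
    moreover have "c2 * (\<theta> * t) \<le> c2 * s" using \<open>\<theta> * t \<le> s\<close> k c by (intro mult_left_mono) auto
    ultimately show "\<bar>y\<bar> \<le> c2 * s" by linarith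
  qed
  with eventually_ge_at_top[of 0]
  show "eventually (\<lambda>t. \<forall>x. \<bar>x\<bar> \<le> c * t \<longrightarrow> \<bar>\<bar>v t x - vbar DI dI \<tau> p h U t\<bar>\<bar> \<le> e) at_top"
  proof eventually_elim
    case (elim t)
    have "v t x - vbar DI dI \<tau> p h U t = Gop DI dI t 0 (v 0) x
        + integral {0..t} (\<lambda>s. Gop DI dI t s (\<lambda>y. source u s y - source (\<lambda>t _. U t) s 0) x)" for x
      using v[OF elim(1), of x] Duhamel_diff_const_profile[OF sol sol_U(1) elim(1), of x]
      unfolding vbar_def source_def by simp
    then show ?case using elim(2) by simp
  qed
next
  show "eventually (\<lambda>t. \<exists>x. \<bar>x\<bar> \<le> c * t) at_top"
    using eventually_ge_at_top[of 0]
  proof eventually_elim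
    case (elim t)
    then show ?case using k by (intro exI[of _ 0]) simp
  qed
qed

end

section \<open>Spreading of the immature population\<close>

lemma bounded_delay_model_exists:
  assumes T: "0 < T" and C1: "C1 DI" "C1 dI" "C1 \<tau>" "C1 p"
    and periodic: "periodic_with T DI" "periodic_with T dI" "periodic_with T \<tau>" "periodic_with T p"
    and signs: "\<And>t. 0 \<le> DI t" "\<And>t. 0 < dI t" "\<And>t. 0 < \<tau> t" "\<And>t. 0 \<le> p t"
    and deriv_\<tau>: "\<And>t. deriv \<tau> t < 1"
    and h_deriv: "\<And>z. 0 \<le> z \<Longrightarrow> (h has_real_derivative h' z) (at z within {0..})"
    and h: "\<And>z. 0 \<le> z \<Longrightarrow> 0 \<le> h z" "h 0 = 0" "(h \<longlongrightarrow> 0) at_top"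
    and t\<beta>: "t\<beta> < T" "t\<beta> - \<tau> t\<beta> = \<beta>" and p_zero: "\<And>t. t \<in> {\<beta>..T} \<Longrightarrow> p t = 0"
  obtains \<delta> Dmax \<tau>min \<tau>max P H K where "bounded_delay_model DI dI \<tau> p h \<delta> Dmax \<tau>min \<tau>max P H K"
proof -
  note cont = C1_imp_continuous[OF C1(1)] C1_imp_continuous[OF C1(2)] C1_imp_continuous[OF C1(3)]
    C1_imp_continuous[OF C1(4)] C1_imp_continuous_deriv[OF C1(3)]
  have h_cont: "continuous_on {0..} h"
    unfolding continuous_on_eq_continuous_within using h_deriv DERIV_continuous by blast
  have p_delay_zero: "p (s - \<tau> s) = 0" if "0 \<le> s" "s - \<tau> s < 0" for s
    using birth_rate_vanishes_before_zero[OF C1(3) deriv_\<tau> periodic(3,4) t\<beta> p_zero that] .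
  obtain a1 b1 where "\<And>t. DI a1 \<le> DI t" and DI_le: "\<And>t. DI t \<le> DI b1"
    by (rule periodic_continuous_attains_bounds[OF periodic(1) T cont(1)]) (rule that)
  obtain a2 b2 where dI_ge: "\<And>t. dI a2 \<le> dI t" and "\<And>t. dI t \<le> dI b2"
    by (rule periodic_continuous_attains_bounds[OF periodic(2) T cont(2)]) (rule that)
  obtain a3 b3 where \<tau>_bounds: "\<And>t. \<tau> a3 \<le> \<tau> t" "\<And>t. \<tau> t \<le> \<tau> b3"
    by (rule periodic_continuous_attains_bounds[OF periodic(3) T cont(3)]) (rule that)
  obtain a4 b4 where "\<And>t. p a4 \<le> p t" and p_le: "\<And>t. p t \<le> p b4"
    by (rule periodic_continuous_attains_bounds[OF periodic(4) T cont(4)]) (rule that)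
  obtain a5 b5 where deriv_\<tau>_ge: "\<And>t. deriv \<tau> a5 \<le> deriv \<tau> t" and "\<And>t. deriv \<tau> t \<le> deriv \<tau> b5"
    by (rule periodic_continuous_attains_bounds[OF periodic_with_deriv[OF C1(3) periodic(3)] T cont(5)])
      (rule that)
  obtain H where h_le: "\<And>z. 0 \<le> z \<Longrightarrow> h z \<le> H"
    by (rule continuous_on_ray_bounded_above[OF h_cont h(3)]) (rule that)
  have "bounded_delay_model DI dI \<tau> p h (dI a2) (DI b1) (\<tau> a3) (\<tau> b3) (p b4) H (1 - deriv \<tau> a5)"
  proof unfold_locales
    show "0 \<le> 1 - deriv \<tau> t" "1 - deriv \<tau> t \<le> 1 - deriv \<tau> a5" for t
      using deriv_\<tau>[of t] deriv_\<tau>_ge[of t] by simp_all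
  qed (fact cont h_cont signs DI_le dI_ge \<tau>_bounds p_le h h_le p_delay_zero)+
  then show ?thesis by (rule that)
qed

theorem theorem5p4:
  fixes T \<alpha> \<beta> t\<alpha> t\<beta> zs ustar cstar :: real
    and DM DI dM dI \<tau> p h h' ubar :: "real \<Rightarrow> real"
    and u v :: "real \<Rightarrow> real \<Rightarrow> real"
  assumes T_pos: "T > 0"
    and C1_coeffs: "C1 DM" "C1 DI" "C1 dM" "C1 dI" "C1 \<tau>" "C1 p"
    and periodic: "periodic_with T DM" "periodic_with T DI" "periodic_with T dM"
        "periodic_with T dI" "periodic_with T \<tau>" "periodic_with T p"
    and signs: "\<forall>t. DM t \<ge> 0" "\<forall>t. DI t \<ge> 0" "\<forall>t. dM t > 0" "\<forall>t. dI t > 0"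
        "\<forall>t. \<tau> t > 0" "\<forall>t. p t \<ge> 0"
    and h_C1: "continuous_on {0..} h'" "\<forall>z\<ge>0. (h has_real_derivative h' z) (at z within {0..})"
    and h_nonneg: "\<forall>z\<ge>0. h z \<ge> 0"
    and times: "0 < \<alpha>" "\<alpha> \<le> \<beta>" "\<beta> < t\<alpha>" "t\<alpha> \<le> t\<beta>" "t\<beta> < T"
        "t\<alpha> - \<tau> t\<alpha> = \<alpha>" "t\<beta> - \<tau> t\<beta> = \<beta>"
    and p_zero: "\<forall>t\<in>{0..\<alpha>} \<union> {\<beta>..T}. p t = 0"
    and tau_deriv: "\<forall>t. deriv \<tau> t < 1"
    and h0: "h 0 = 0"
    and h_lim: "(h \<longlongrightarrow> 0) at_top"
    and zs: "zs \<ge> 0"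
    and h_incr: "\<forall>x y. 0 \<le> x \<and> x < y \<and> y < zs \<longrightarrow> h x < h y"
    and h_decr: "\<forall>x y. zs \<le> x \<and> x < y \<longrightarrow> h y < h x"
    and h_subhom: "\<forall>l z. 0 < l \<and> l < 1 \<and> 0 \<le> z \<longrightarrow> h (l * z) \<ge> l * h z"
    and L_gt1: "Lconst T dM dI \<tau> p (h' 0) t\<alpha> t\<beta> > 1"
    and ustar: "ustar > 0" "Qc T DM dM DI dI \<tau> p h ustar = ustar"
        "\<forall>z. z > 0 \<and> Qc T DM dM DI dI \<tau> p h z = z \<longrightarrow> ustar \<le> z"
    and h_mono_ustar: "mono_on {0..ustar} h"
    and ubar: "mature_sol DM dM DI dI \<tau> p h (\<lambda>t x. ubar t)" "ubar 0 = ustar"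
        "periodic_with T ubar"
    and cstar: "cstar > 0"
    and u_sol: "mature_sol DM dM DI dI \<tau> p h u"
    and u_spread_out: "\<forall>c > cstar / T.
        ((\<lambda>t. Sup {u t x | x. c * t \<le> \<bar>x\<bar>}) \<longlongrightarrow> 0) at_top"
    and u_spread_in: "\<forall>c. 0 < c \<and> c < cstar / T \<longrightarrow>
        ((\<lambda>t. Sup {\<bar>u t x - ubar t\<bar> | x. \<bar>x\<bar> \<le> c * t}) \<longlongrightarrow> 0) at_top"
    and v0_bdd: "bounded (range (v 0))"
    and v0_meas: "v 0 \<in> borel_measurable borel"
    and v_sol: "\<forall>t\<ge>0. \<forall>x. v t x = Gop DI dI t 0 (v 0) x
        + integral {0..t} (\<lambda>s. Gop DI dI t s
            (\<lambda>y. p s * h (u s y) - Rop DI dI \<tau> p h s (u (s - \<tau> s)) y) x)"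
  shows "(\<forall>c > cstar / T.
           ((\<lambda>t. Sup {v t x | x. c * t \<le> \<bar>x\<bar>}) \<longlongrightarrow> 0) at_top) \<and>
         (\<forall>c. 0 < c \<and> c < cstar / T \<longrightarrow>
           ((\<lambda>t. Sup {\<bar>v t x - vbar DI dI \<tau> p h ubar t\<bar> | x. \<bar>x\<bar> \<le> c * t}) \<longlongrightarrow> 0) at_top)"
proof -
  (* Only the hypotheses on the coefficients of the v-equation, the boundedness of v(0, .) and
     the spreading of u are used; those on DM, dM, z*, u*, L and the shape of h serve to
     establish the spreading of u, which is assumed here. *)
  have p_window: "p t = 0" if "t \<in> {\<beta>..T}" for t
    using p_zero that by blast
  obtain \<delta> Dmax \<tau>min \<tau>max P H K where "bounded_delay_model DI dI \<tau> p h \<delta> Dmax \<tau>min \<tau>max P H K"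
    by (rule bounded_delay_model_exists[OF T_pos C1_coeffs(2,4,5,6) periodic(2,4,5,6)
          signs(2,4,5,6)[rule_format] tau_deriv[rule_format] h_C1(2)[rule_format]
          h_nonneg[rule_format] h0 h_lim times(5,7) p_window])
      (assumption | rule that)+
  then interpret bounded_delay_model DI dI \<tau> p h \<delta> Dmax \<tau>min \<tau>max P H K .
  have v: "v t x = Gop DI dI t 0 (v 0) x + integral {0..t} (\<lambda>s. Gop DI dI t s (source u s) x)"
    if "0 \<le> t" for t x
    using v_sol that unfolding source_def by simp
  have "0 < cstar / T" using cstar T_pos by simp
  show ?thesis
  proof (intro conjI allI impI)
    fix c
    assume "cstar / T < c"
    then show "((\<lambda>t. Sup {v t x | x. c * t \<le> \<bar>x\<bar>}) \<longlongrightarrow> 0) at_top"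
      by (rule spreading_outside[OF u_sol less_imp_le[OF \<open>0 < cstar / T\<close>] _ u_spread_out[rule_format]
            v0_bdd v])
  next
    fix c
    assume "0 < c \<and> c < cstar / T"
    then show "((\<lambda>t. Sup {\<bar>v t x - vbar DI dI \<tau> p h ubar t\<bar> | x. \<bar>x\<bar> \<le> c * t}) \<longlongrightarrow> 0) at_top"
      by (intro spreading_inside[OF u_sol ubar(1,3) T_pos _ _ u_spread_in[rule_format] v0_bdd v]) auto
  qed
qed

end
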